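(* Let $P$ be a poset. If $P$ is well-quasi-ordered and the set $\mathcal{J}^{\neg\downarrow}(P)$ of non-principal ideals of $P$, ordered by inclusion, is better-quasi-ordered, then $P$ is better-quasi-ordered.
   Context: An ideal of $P$ is a nonempty subset $I\subseteq P$ which is an initial segment (if $x\leq y$ and $y\in I$ then $x\in I$) and is up-directed (any two elements of $I$ have an upper bound in $I$). An ideal is principal if it has a largest element, i.e. is of the form $\downarrow x=\{y: y\leq x\}$. A quasi-ordered set is well-quasi-ordered (wqo) if it is well-founded and has no infinite antichain. Barriers and bqo: finite subsets of $\mathbb{N}$ are identified with their increasing enumerations. For finite $s,t\subseteq\mathbb{N}$ write $s\triangleleft t$ if there is a finite $r\subseteq\mathbb{N}$ such that $s$ is a proper initial segment of $r$ and $t$ is $r$ with its least element removed. A barrier is an infinite set $B$ of finite subsets of $\mathbb{N}$, no member of which is a proper subset of another, such that every infinite $X\subseteq\bigcup B$ has a nonempty initial segment belonging to $B$. A barrier is well-ordered by the lexicographic order; its order type is the type of this well-order. A map $f$ from a barrier $B$ into a quasi-ordered set $Q$ is good if there exist $s,t\in B$ with $s\triangleleft t$ and $f(s)\leq f(t)$, and bad otherwise. For a countable ordinal $\alpha$, $Q$ is $\alpha$-bqo if every map from a barrier of order type at most $\alpha$ into $Q$ is good; $Q$ is better-quasi-ordered (bqo) if it is $\alpha$-bqo for every countable ordinal $\alpha$. *)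

theory Defs
  imports Main "HOL-Library.Countable_Set"
begin

definition quasi_order_on :: "'a set \<Rightarrow> ('a \<Rightarrow> 'a \<Rightarrow> bool) \<Rightarrow> bool" where
  "quasi_order_on Q le \<longleftrightarrow> (\<forall>x\<in>Q. le x x) \<and>
     (\<forall>x\<in>Q. \<forall>y\<in>Q. \<forall>z\<in>Q. le x y \<longrightarrow> le y z \<longrightarrow> le x z)"

definition poset_on :: "'a set \<Rightarrow> ('a \<Rightarrow> 'a \<Rightarrow> bool) \<Rightarrow> bool" where
  "poset_on P le \<longleftrightarrow> quasi_order_on P le \<and>
     (\<forall>x\<in>P. \<forall>y\<in>P. le x y \<longrightarrow> le y x \<longrightarrow> x = y)"

definition wqo_on :: "'a set \<Rightarrow> ('a \<Rightarrow> 'a \<Rightarrow> bool) \<Rightarrow> bool" where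
  "wqo_on Q le \<longleftrightarrow> quasi_order_on Q le \<and>
     \<not> (\<exists>g::nat \<Rightarrow> 'a. \<forall>i. g i \<in> Q \<and> le (g (Suc i)) (g i) \<and> \<not> le (g i) (g (Suc i))) \<and>
     (\<forall>A\<subseteq>Q. (\<forall>x\<in>A. \<forall>y\<in>A. x \<noteq> y \<longrightarrow> \<not> le x y) \<longrightarrow> finite A)"

definition ideal_on :: "'a set \<Rightarrow> ('a \<Rightarrow> 'a \<Rightarrow> bool) \<Rightarrow> 'a set \<Rightarrow> bool" where
  "ideal_on P le I \<longleftrightarrow> I \<noteq> {} \<and> I \<subseteq> P \<and>
     (\<forall>x\<in>P. \<forall>y\<in>I. le x y \<longrightarrow> x \<in> I) \<and>
     (\<forall>x\<in>I. \<forall>y\<in>I. \<exists>z\<in>I. le x z \<and> le y z)"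

definition principal_on :: "'a set \<Rightarrow> ('a \<Rightarrow> 'a \<Rightarrow> bool) \<Rightarrow> 'a set \<Rightarrow> bool" where
  "principal_on P le I \<longleftrightarrow> (\<exists>x\<in>P. I = {y\<in>P. le y x})"

definition nonprincipal_ideals :: "'a set \<Rightarrow> ('a \<Rightarrow> 'a \<Rightarrow> bool) \<Rightarrow> 'a set set" where
  "nonprincipal_ideals P le = {I. ideal_on P le I \<and> \<not> principal_on P le I}"

text \<open>Finite subsets of nat identified with their increasing enumerations.\<close>
abbreviation enum :: "nat set \<Rightarrow> nat list" where
  "enum s \<equiv> sorted_list_of_set s"

definition shift_rel :: "nat set \<Rightarrow> nat set \<Rightarrow> bool" (infix "\<lhd>\<^sub>B" 50) where
  "s \<lhd>\<^sub>B t \<longleftrightarrow> finite s \<and> (\<exists>r. finite r \<and> (\<exists>xs. xs \<noteq> [] \<and> enum r = enum s @ xs) \<and>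
      t = r - {Min r})"

definition init_seg_of_set :: "nat set \<Rightarrow> nat set \<Rightarrow> bool" where
  "init_seg_of_set s X \<longleftrightarrow> finite s \<and> s \<subseteq> X \<and> (\<forall>x\<in>X. \<forall>y\<in>s. x < y \<longrightarrow> x \<in> s)"

definition barrier :: "nat set set \<Rightarrow> bool" where
  "barrier B \<longleftrightarrow> infinite B \<and> (\<forall>s\<in>B. finite s) \<and>
     (\<forall>s\<in>B. \<forall>t\<in>B. \<not> s \<subset> t) \<and>
     (\<forall>X. X \<subseteq> \<Union>B \<longrightarrow> infinite X \<longrightarrow>
        (\<exists>s\<in>B. s \<noteq> {} \<and> init_seg_of_set s X))"

text \<open>Lexicographic order on a barrier (reflexive, as a well-order relation).\<close>
definition barrier_lex :: "nat set set \<Rightarrow> nat set rel" where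
  "barrier_lex B = {(s, t). s \<in> B \<and> t \<in> B \<and>
     (s = t \<or> (enum s, enum t) \<in> lexord {(x, y). x < y})}"

definition good_map :: "nat set set \<Rightarrow> ('a \<Rightarrow> 'a \<Rightarrow> bool) \<Rightarrow> (nat set \<Rightarrow> 'a) \<Rightarrow> bool" where
  "good_map B le f \<longleftrightarrow> (\<exists>s\<in>B. \<exists>t\<in>B. s \<lhd>\<^sub>B t \<and> le (f s) (f t))"

definition alpha_bqo_on :: "'b rel \<Rightarrow> 'a set \<Rightarrow> ('a \<Rightarrow> 'a \<Rightarrow> bool) \<Rightarrow> bool" where
  "alpha_bqo_on \<alpha> Q le \<longleftrightarrow> (\<forall>B f. barrier B \<longrightarrow> (barrier_lex B, \<alpha>) \<in> ordLeq \<longrightarrow>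
      f ` B \<subseteq> Q \<longrightarrow> good_map B le f)"

text \<open>Countable ordinals are represented by well-orders on (subsets of) nat.\<close>
definition countable_ordinal :: "'b rel \<Rightarrow> bool" where
  "countable_ordinal \<alpha> \<longleftrightarrow> Well_order \<alpha> \<and> countable (Field \<alpha>)"

definition bqo_on :: "'a set \<Rightarrow> ('a \<Rightarrow> 'a \<Rightarrow> bool) \<Rightarrow> bool" where
  "bqo_on Q le \<longleftrightarrow> quasi_order_on Q le \<and>
     (\<forall>\<alpha> :: nat rel. countable_ordinal \<alpha> \<longrightarrow> alpha_bqo_on \<alpha> Q le)"

end

theory Submission
  imports Defs "HOL-Library.Ramsey"
begin

abbreviation iseg :: "nat set \<Rightarrow> nat set \<Rightarrow> bool" where
  "iseg s X \<equiv> init_seg_of_set s X"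

definition above :: "nat set \<Rightarrow> nat set" where
  "above v = {x. \<forall>y\<in>v. y < x}"

lemma above_empty [simp]: "above {} = UNIV"
  unfolding above_def by simp

lemma infinite_Int_above:
  assumes "infinite Z" "finite s"
  shows "infinite (Z \<inter> above s)"
proof -
  have "Z - {..Max (insert 0 s)} \<subseteq> Z \<inter> above s"
  proof
    fix x assume x: "x \<in> Z - {..Max (insert 0 s)}"
    have "y < x" if "y \<in> s" for y
    proof -
      have "y \<le> Max (insert 0 s)" using assms(2) that by simp
      then show ?thesis using x by simp
    qed
    then show "x \<in> Z \<inter> above s" using x unfolding above_def by blast
  qed
  then show ?thesis
    using assms(1) by (metis Diff_infinite_finite finite_atMost finite_subset)
qed

lemma iseg_finite: "iseg s X \<Longrightarrow> finite s"
  unfolding init_seg_of_set_def by blast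

lemma iseg_subset: "iseg s X \<Longrightarrow> s \<subseteq> X"
  unfolding init_seg_of_set_def by blast

lemma iseg_empty: "iseg {} X"
  unfolding init_seg_of_set_def by blast

lemma iseg_trans: "iseg a b \<Longrightarrow> iseg b X \<Longrightarrow> iseg a X"
  unfolding init_seg_of_set_def by blast

lemma iseg_linear:
  assumes "iseg a X" "iseg b X"
  shows "iseg a b \<or> iseg b a"
proof (cases "a \<subseteq> b")
  case False
  then obtain y where "y \<in> a" "y \<notin> b" by blast
  with assms have "b \<subseteq> a"
    unfolding init_seg_of_set_def by (metis linorder_neqE_nat subset_iff)
  then show ?thesis using assms unfolding init_seg_of_set_def by blast
qed (use assms in \<open>auto simp: init_seg_of_set_def\<close>)

lemma iseg_Diff_above: "iseg v t \<Longrightarrow> t - v \<subseteq> above v"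
  unfolding init_seg_of_set_def above_def by (auto, metis linorder_neqE_nat)

lemma iseg_Un_above:
  assumes "finite v" "X \<subseteq> above v" "iseg u X"
  shows "iseg (v \<union> u) (v \<union> X)"
  unfolding init_seg_of_set_def
proof (intro conjI ballI impI)
  show "finite (v \<union> u)" "v \<union> u \<subseteq> v \<union> X" using assms iseg_finite iseg_subset by blast+
  fix x y assume xy: "x \<in> v \<union> X" "y \<in> v \<union> u" "x < y"
  show "x \<in> v \<union> u"
  proof (cases "x \<in> v")
    case False
    then have "x \<in> X" using xy by blast
    then have "y \<in> u"
      using xy assms(2) unfolding above_def by (auto dest: order.asym)
    then show ?thesis using \<open>x \<in> X\<close> xy(3) assms(3) unfolding init_seg_of_set_def by blast
  qed simp
qed

lemma iseg_Un_above_self: "finite v \<Longrightarrow> X \<subseteq> above v \<Longrightarrow> iseg v (v \<union> X)"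
  using iseg_Un_above[OF _ _ iseg_empty] by simp

lemma iseg_Min:
  assumes "iseg s X" "s \<noteq> {}"
  shows "Min s \<in> X" "Inf X = Min s"
proof -
  have fin: "finite s" using assms(1) by (rule iseg_finite)
  show "Min s \<in> X" using assms fin iseg_subset Min_in by blast
  have "Min s \<le> x" if "x \<in> X" for x
    using assms fin that unfolding init_seg_of_set_def by (metis Min_in Min_le not_le)
  then show "Inf X = Min s"
    using \<open>Min s \<in> X\<close> by (meson antisym wellorder_Inf_le1 wellorder_InfI)
qed

lemma iseg_Diff_Min:
  "iseg s X \<Longrightarrow> s \<noteq> {} \<Longrightarrow> iseg (s - {Min s}) (X - {Min s})"
  unfolding init_seg_of_set_def by auto

lemma Min_less_Diff_Min: "finite s \<Longrightarrow> x \<in> s - {Min s} \<Longrightarrow> Min s < x"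
  by (metis DiffE Min_le insertI1 order_less_le)

lemma sorted_list_of_set_append_iff:
  assumes "finite s" "finite r"
  shows "(\<exists>xs. xs \<noteq> [] \<and> enum r = enum s @ xs) \<longleftrightarrow> iseg s r \<and> s \<noteq> r"
proof
  assume "\<exists>xs. xs \<noteq> [] \<and> enum r = enum s @ xs"
  then obtain xs where xs: "xs \<noteq> []" "enum r = enum s @ xs" by blast
  have r: "r = s \<union> set xs"
    using xs assms by (metis set_append sorted_list_of_set.set_sorted_key_list_of_set)
  have "sorted_wrt (<) (enum s @ xs)"
    using xs(2) assms by (metis sorted_list_of_set.strict_sorted_key_list_of_set)
  then have lt: "\<forall>y\<in>s. \<forall>x\<in>set xs. y < x" using assms by (simp add: sorted_wrt_append)
  have "iseg s r"
    unfolding init_seg_of_set_def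
  proof (intro conjI ballI impI)
    fix x y assume "x \<in> r" "y \<in> s" "x < y"
    then show "x \<in> s" using r lt by (auto dest: order.asym)
  qed (use assms r in auto)
  moreover have "s \<noteq> r"
  proof
    assume "s = r"
    with xs show False by simp
  qed
  ultimately show "iseg s r \<and> s \<noteq> r" by blast
next
  assume sr: "iseg s r \<and> s \<noteq> r"
  then have sub: "s \<subseteq> r" by (blast dest: iseg_subset)
  define xs where "xs = enum (r - s)"
  have "\<forall>y\<in>s. \<forall>x\<in>r - s. y < x"
    using sr unfolding init_seg_of_set_def by (metis DiffD1 DiffD2 linorder_neqE_nat)
  then have "sorted_wrt (<) (enum s @ xs)"
    using assms unfolding xs_def by (simp add: sorted_wrt_append)
  moreover have "set (enum s @ xs) = r" using assms sub unfolding xs_def by auto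
  moreover have "length (enum s @ xs) = card r"
    using assms sub by (simp add: xs_def card_Diff_subset card_mono)
  ultimately have "enum r = enum s @ xs"
    using assms(2) sorted_list_of_set_unique by blast
  moreover have "xs \<noteq> []" using assms sr sub unfolding xs_def by auto
  ultimately show "\<exists>xs. xs \<noteq> [] \<and> enum r = enum s @ xs" by blast
qed

lemma shift_rel_iff:
  "s \<lhd>\<^sub>B t \<longleftrightarrow> finite s \<and> (\<exists>r. finite r \<and> iseg s r \<and> s \<noteq> r \<and> t = r - {Min r})"
  unfolding shift_rel_def by (metis (no_types, lifting) sorted_list_of_set_append_iff)

lemma shift_rel_nonempty_iff:
  assumes ne: "s \<noteq> {}"
  shows "s \<lhd>\<^sub>B t \<longleftrightarrow> finite s \<and> finite t \<and> iseg (s - {Min s}) t \<and> s - {Min s} \<noteq> t \<and>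
    (\<forall>x\<in>t. Min s < x)"
    (is "_ \<longleftrightarrow> ?rhs")
proof
  assume "s \<lhd>\<^sub>B t"
  then obtain r where r: "finite r" "iseg s r" "s \<noteq> r" "t = r - {Min r}" and fs: "finite s"
    unfolding shift_rel_iff by blast
  have Min: "Min r = Min s"
    using iseg_Min[OF r(2) ne] r(1) cInf_eq_Min[of r] by (metis empty_iff)
  have "Min s \<in> s" using fs ne by simp
  moreover have "s \<subseteq> r" using r(2) by (rule iseg_subset)
  ultimately show ?rhs
    using fs r iseg_Diff_Min[OF r(2) ne] Min Min_le[OF r(1)] by (auto simp: order_less_le)
next
  assume ?rhs
  then have fs: "finite s" and ft: "finite t" and st: "iseg (s - {Min s}) t" "s - {Min s} \<noteq> t"
    and gt: "\<forall>x\<in>t. Min s < x" by blast+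
  define r where "r = insert (Min s) t"
  have Min: "Min r = Min s"
    using ft gt unfolding r_def by (intro Min_eqI) auto
  have "iseg s r"
    unfolding init_seg_of_set_def
  proof (intro conjI ballI impI)
    show "s \<subseteq> r" using st(1) unfolding r_def by (auto dest: iseg_subset)
    fix x y assume xy: "x \<in> r" "y \<in> s" "x < y"
    show "x \<in> s"
    proof (cases "x = Min s")
      case False
      then have "x \<in> t" "Min s < x" using xy(1) gt unfolding r_def by auto
      then have "y \<in> s - {Min s}" using xy by auto
      then show ?thesis using st(1) \<open>x \<in> t\<close> xy(3) unfolding init_seg_of_set_def by blast
    qed (use fs ne in simp)
  qed (rule fs)
  moreover have "s \<noteq> r"
    using st gt unfolding r_def by auto
  moreover have "t = r - {Min r}" unfolding Min using gt unfolding r_def by auto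
  moreover have "finite r" using ft unfolding r_def by simp
  ultimately show "s \<lhd>\<^sub>B t" unfolding shift_rel_iff using fs by blast
qed

lemma shift_rel_empty: "{} \<lhd>\<^sub>B {}"
  unfolding shift_rel_iff by (intro conjI exI[of _ "{0}"]) (auto simp: iseg_empty)

lemma shift_rel_singletons: "a < b \<Longrightarrow> {a} \<lhd>\<^sub>B {b}"
  by (simp add: shift_rel_nonempty_iff iseg_empty)

lemma shift_rel_iseg_insert_Min:
  assumes st: "s \<lhd>\<^sub>B t" and ne: "s \<noteq> {}" and tT: "iseg t T" and T: "T \<subseteq> above {Min s}"
  shows "iseg s (insert (Min s) T)"
proof -
  have fs: "finite s" and sT: "iseg (s - {Min s}) T"
    using st ne iseg_trans[OF _ tT] by (auto simp: shift_rel_nonempty_iff)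
  show ?thesis
    unfolding init_seg_of_set_def
  proof (intro conjI ballI impI)
    show "s \<subseteq> insert (Min s) T" using sT by (auto dest: iseg_subset)
    fix x y assume xy: "x \<in> insert (Min s) T" "y \<in> s" "x < y"
    show "x \<in> s"
    proof (cases "x = Min s")
      case False
      then have "x \<in> T" "Min s < x" using xy(1) T unfolding above_def by auto
      then have "y \<in> s - {Min s}" using xy by auto
      then show ?thesis using sT \<open>x \<in> T\<close> xy(3) unfolding init_seg_of_set_def by blast
    qed (use fs ne in simp)
  qed (rule fs)
qed

lemma nonincreasing_nat_eventually_constant:
  fixes e :: "nat \<Rightarrow> nat"
  assumes dec: "\<And>i. i \<ge> N \<Longrightarrow> e (Suc i) \<le> e i"
  shows "\<exists>M\<ge>N. \<forall>i\<ge>M. e i = e M"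
proof -
  obtain M where M: "M \<ge> N" "e M = Inf (e ` {N..})"
    using wellorder_InfI[of "e N" "e ` {N..}"] by auto
  have "e i \<le> e M" if "i \<ge> M" for i
    using that by (induction i rule: dec_induct) (use dec M(1) in \<open>auto intro: order_trans\<close>)
  moreover have "e M \<le> e i" if "i \<ge> M" for i
    using M that by (simp add: wellorder_Inf_le1)
  ultimately show ?thesis using M(1) by (meson antisym)
qed

lemma lexord_decreasing_prefixes_stabilize:
  fixes L :: "nat \<Rightarrow> nat list"
  assumes dec: "\<And>i. (L (Suc i), L i) \<in> lexord {(x, y). x < y}"
  shows "\<exists>N. \<forall>i\<ge>N. k \<le> length (L i) \<and> take k (L i) = take k (L N)"
proof (induction k)
  case (Suc k)
  then obtain N where N: "\<And>i. i \<ge> N \<Longrightarrow> k \<le> length (L i) \<and> take k (L i) = take k (L N)"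
    by blast
  have asym: "asym (lexord {(x::nat, y). x < y})"
    by (rule lexord_asym) (auto intro: asymI)
  have len: "k < length (L i)" if "i \<ge> N" for i
  proof (rule ccontr)
    assume "\<not> k < length (L i)"
    then have "L i = take k (L (Suc i))"
      using N[OF that] N[of "Suc i"] that by (metis le_SucI le_antisym not_less take_all)
    then have Suc_i: "L (Suc i) = L i @ drop k (L (Suc i))" by (metis append_take_drop_id)
    moreover have "L (Suc i) \<noteq> L i"
      using dec[of i] by (auto simp: lexord_irreflexive)
    ultimately have "drop k (L (Suc i)) \<noteq> []" by auto
    then obtain d ds where "drop k (L (Suc i)) = d # ds" by (meson neq_Nil_conv)
    then have "(L i, L i @ drop k (L (Suc i))) \<in> lexord {(x, y). x < y}"
      by (simp add: lexord_append_rightI)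
    then have "(L i, L (Suc i)) \<in> lexord {(x, y). x < y}" using Suc_i by simp
    then show False using dec[of i] asym by (auto dest: asymD)
  qed
  define e where "e i = L i ! k" for i
  have split: "L i = take k (L N) @ e i # drop (Suc k) (L i)" if "i \<ge> N" for i
    using id_take_nth_drop[OF len[OF that]] N[OF that] unfolding e_def by simp
  have "e (Suc i) \<le> e i" if "i \<ge> N" for i
  proof -
    have "(take k (L N) @ e (Suc i) # drop (Suc k) (L (Suc i)),
           take k (L N) @ e i # drop (Suc k) (L i)) \<in> lexord {(x, y). x < y}"
      using dec[of i] split[OF that] split[of "Suc i"] that by simp
    then show ?thesis by (auto simp: lexord_same_pref_iff)
  qed
  then obtain M where M: "M \<ge> N" "\<And>i. i \<ge> M \<Longrightarrow> e i = e M"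
    using nonincreasing_nat_eventually_constant by blast
  have take_Suc: "take (Suc k) (L i) = take k (L N) @ [e i]" if "i \<ge> N" for i
    using len[OF that] N[OF that] unfolding e_def by (simp add: take_Suc_conv_app_nth)
  have "take (Suc k) (L i) = take (Suc k) (L M)" if "i \<ge> M" for i
    using take_Suc[of i] take_Suc[of M] M(1) M(2)[OF that] that by simp
  then show ?case using len M(1) by (metis Suc_leI order_trans)
qed simp

lemma barrier_lex_wf:
  assumes B: "barrier B"
  shows "wf (barrier_lex B - Id)"
proof (unfold wf_iff_no_infinite_down_chain, rule notI)
  assume "\<exists>f. \<forall>i. (f (Suc i), f i) \<in> barrier_lex B - Id"
  then obtain f where f: "\<And>i. (f (Suc i), f i) \<in> barrier_lex B - Id" by blast
  have fB: "f i \<in> B" for i using f[of i] unfolding barrier_lex_def by auto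
  have fin: "finite (f i)" for i using fB B unfolding barrier_def by blast
  define L where "L i = enum (f i)" for i
  have "(L (Suc i), L i) \<in> lexord {(x, y). x < y}" for i
    using f[of i] unfolding barrier_lex_def L_def by auto
  then have "\<forall>k. \<exists>N. \<forall>i\<ge>N. k \<le> length (L i) \<and> take k (L i) = take k (L N)"
    using lexord_decreasing_prefixes_stabilize by blast
  then obtain N where N: "\<And>k i. i \<ge> N k \<Longrightarrow> k \<le> length (L i) \<and> take k (L i) = take k (L (N k))"
    by metis
  define pre where "pre m = set (take m (L (N m)))" for m
  have pre_take: "pre m = set (take m (L i))" if "i \<ge> N m" for m i
    using N[OF that] unfolding pre_def by simp
  define X where "X = (\<Union>m. pre m)"
  have pre_X: "iseg (pre m) X" for m
    unfolding init_seg_of_set_def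
  proof (intro conjI ballI impI)
    show "finite (pre m)" "pre m \<subseteq> X" unfolding pre_def X_def by auto
    fix x y assume xy: "x \<in> X" "y \<in> pre m" "x < y"
    then obtain m' where "x \<in> pre m'" unfolding X_def by blast
    define i where "i = max (N m) (N m')"
    have "x \<in> set (L i)"
      using \<open>x \<in> pre m'\<close> pre_take[of m' i] unfolding i_def by (auto dest: in_set_takeD)
    then have x: "x \<in> set (take m (L i)) \<or> x \<in> set (drop m (L i))"
      by (metis Un_iff append_take_drop_id set_append)
    have "sorted_wrt (<) (L i)" unfolding L_def by simp
    then have "\<forall>a\<in>set (take m (L i)). \<forall>b\<in>set (drop m (L i)). a < b"
      using sorted_wrt_append[of "(<)" "take m (L i)" "drop m (L i)"] by simp
    moreover have pre_i: "pre m = set (take m (L i))" using pre_take[of m i] unfolding i_def by simp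
    ultimately show "x \<in> pre m"
      using x xy(2,3) by (auto dest: order.asym)
  qed
  have card_pre: "card (pre m) = m" for m
    using N[of m "N m"] fin[of "N m"] unfolding pre_def L_def
    by (simp add: distinct_card)
  have pre_f: "pre m \<subseteq> f (N m)" for m
    using set_take_subset[of m "L (N m)"] fin[of "N m"] unfolding pre_def L_def by simp
  have "X \<subseteq> \<Union>B" using fB pre_f unfolding X_def by blast
  moreover have "infinite X"
    using card_pre pre_X by (metis Suc_n_not_le_n card_mono iseg_subset)
  ultimately obtain u where u: "u \<in> B" "iseg u X"
    using B unfolding barrier_def by blast
  define m where "m = Suc (card u)"
  have "\<not> iseg (pre m) u"
    using card_pre u(2) unfolding m_def by (metis Suc_n_not_le_n card_mono iseg_finite iseg_subset)
  then have "u \<subseteq> pre m" using iseg_linear[OF u(2) pre_X[of m]] iseg_subset by blast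
  moreover have "u \<noteq> pre m"
  proof
    assume "u = pre m"
    then have "card u = m" using card_pre by simp
    then show False unfolding m_def by simp
  qed
  ultimately have "u \<subset> f (N m)" using pre_f[of m] by blast
  moreover have "\<forall>s\<in>B. \<forall>t\<in>B. \<not> s \<subset> t" using B unfolding barrier_def by blast
  ultimately show False using u(1) fB by blast
qed

lemma barrier_lex_Well_order:
  assumes B: "barrier B"
  shows "Well_order (barrier_lex B)"
proof -
  have fin: "\<forall>s\<in>B. finite s" using B unfolding barrier_def by blast
  have less_trans: "trans {(x::nat, y). x < y}" by (auto simp: trans_def)
  have less_irrefl: "\<forall>x. (x, x) \<notin> {(x::nat, y). x < y}" by simp
  have Field: "Field (barrier_lex B) = B"
    unfolding barrier_lex_def Field_def by auto
  have "refl_on B (barrier_lex B)" unfolding refl_on_def barrier_lex_def by auto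
  moreover have "trans (barrier_lex B)"
    unfolding trans_def barrier_lex_def using lexord_trans[OF _ _ less_trans] by blast
  moreover have "antisym (barrier_lex B)"
    unfolding antisym_def barrier_lex_def
    using lexord_trans[OF _ _ less_trans] lexord_irreflexive[OF less_irrefl] by blast
  moreover have "total_on B (barrier_lex B)"
    unfolding total_on_def barrier_lex_def
  proof (intro ballI impI)
    fix s t assume st: "s \<in> B" "t \<in> B" "s \<noteq> t"
    then have "enum s \<noteq> enum t"
      using fin by (metis sorted_list_of_set.set_sorted_key_list_of_set)
    moreover have "(enum s, enum t) \<in> lexord {(x, y). x < y} \<or> enum s = enum t \<or>
        (enum t, enum s) \<in> lexord {(x, y). x < y}"
      by (rule lexord_linear) auto
    ultimately show "(s, t) \<in> {(s, t). s \<in> B \<and> t \<in> B \<and> (s = t \<or> (enum s, enum t) \<in> lexord {(x, y). x < y})} \<or>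
        (t, s) \<in> {(s, t). s \<in> B \<and> t \<in> B \<and> (s = t \<or> (enum s, enum t) \<in> lexord {(x, y). x < y})}"
      using st by blast
  qed
  moreover have "barrier_lex B \<subseteq> B \<times> B" unfolding barrier_lex_def by auto
  ultimately show ?thesis
    using barrier_lex_wf[OF B] Field
    unfolding well_order_on_def linear_order_on_def partial_order_on_def preorder_on_def
    by simp
qed

lemma barrier_lex_ordLeq_countable_ordinal:
  assumes B: "barrier B"
  shows "\<exists>\<alpha>::nat rel. countable_ordinal \<alpha> \<and> (barrier_lex B, \<alpha>) \<in> ordLeq"
proof -
  let ?g = "to_nat_on (Collect finite :: nat set set)"
  have W: "Well_order (barrier_lex B)" using B by (rule barrier_lex_Well_order)
  have "Field (barrier_lex B) \<subseteq> Collect finite"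
    using B unfolding barrier_def barrier_lex_def Field_def by auto
  then have inj: "inj_on ?g (Field (barrier_lex B))"
    by (meson countable_Collect_finite inj_on_subset inj_on_to_nat_on)
  let ?\<alpha> = "dir_image (barrier_lex B) ?g"
  have "countable_ordinal ?\<alpha>"
    unfolding countable_ordinal_def using Well_order_dir_image[OF W inj] by simp
  moreover have "(barrier_lex B, ?\<alpha>) \<in> ordLeq"
    using dir_image_ordIso[OF W inj] ordIso_iff_ordLeq by blast
  ultimately show ?thesis by blast
qed

lemma bqo_on_good_map:
  assumes "bqo_on Q le" "barrier B" "f ` B \<subseteq> Q"
  shows "good_map B le f"
proof -
  obtain \<alpha> :: "nat rel" where "countable_ordinal \<alpha>" "(barrier_lex B, \<alpha>) \<in> ordLeq"
    using barrier_lex_ordLeq_countable_ordinal[OF assms(2)] by blast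
  then show ?thesis using assms unfolding bqo_on_def alpha_bqo_on_def by blast
qed

lemma wqo_on_good_pair:
  fixes q :: "nat \<Rightarrow> 'a"
  assumes w: "wqo_on P le" and q: "\<And>i. q i \<in> P"
  shows "\<exists>i j. i < j \<and> le (q i) (q j)"
proof (rule ccontr)
  assume bad: "\<not> (\<exists>i j. i < j \<and> le (q i) (q j))"
  define col where "col e = (if le (q (Max e)) (q (Min e)) then 0 else 1 :: nat)" for e :: "nat set"
  have "\<forall>x\<in>UNIV. \<forall>y\<in>UNIV. x \<noteq> y \<longrightarrow> col {x, y} < 2" by (simp add: col_def)
  from Ramsey2[OF infinite_UNIV_nat this] obtain Y t where Y: "infinite Y" and "t < 2"
    and hom: "\<forall>x\<in>Y. \<forall>y\<in>Y. x \<noteq> y \<longrightarrow> col {x, y} = t"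
    by (elim exE conjE)
  define e where "e = enumerate Y"
  have e: "strict_mono e" "\<And>k. e k \<in> Y"
    using Y strict_mono_enumerate enumerate_in_set unfolding e_def by auto
  have col_e: "col {e i, e j} = (if le (q (e j)) (q (e i)) then 0 else 1)" if "i < j" for i j
  proof -
    have "e i < e j" using e(1) that by (rule strict_monoD)
    then show ?thesis unfolding col_def by (simp add: insert_commute max_def min_def)
  qed
  have t: "col {e i, e j} = t" if "i < j" for i j
    using hom e that by (metis less_irrefl strict_mono_less)
  have no_descent: "\<not> (\<forall>i. g i \<in> P \<and> le (g (Suc i)) (g i) \<and> \<not> le (g i) (g (Suc i)))"
    for g :: "nat \<Rightarrow> 'a"
    using w unfolding wqo_on_def by blast
  have no_antichain: "\<forall>A\<subseteq>P. (\<forall>x\<in>A. \<forall>y\<in>A. x \<noteq> y \<longrightarrow> \<not> le x y) \<longrightarrow> finite A"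
    using w unfolding wqo_on_def by (rule conjunct2[OF conjunct2])
  consider "t = 0" | "t = 1" using \<open>t < 2\<close> by linarith
  then show False
  proof cases
    case 1
    have desc: "le (q (e (Suc k))) (q (e k)) \<and> \<not> le (q (e k)) (q (e (Suc k)))" for k
    proof
      show "le (q (e (Suc k))) (q (e k))"
        using t[of k "Suc k"] col_e[of k "Suc k"] 1 by (simp split: if_splits)
      show "\<not> le (q (e k)) (q (e (Suc k)))"
        using bad strict_monoD[OF e(1), of k "Suc k"] by blast
    qed
    then show False using no_descent[of "q \<circ> e"] q by simp
  next
    case 2
    have pair: "\<not> le (q (e j)) (q (e i)) \<and> \<not> le (q (e i)) (q (e j))" if "i < j" for i j
    proof
      show "\<not> le (q (e j)) (q (e i))"
        using t[OF that] col_e[OF that] 2 by (metis zero_neq_one)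
      show "\<not> le (q (e i)) (q (e j))"
        using bad strict_monoD[OF e(1) that] by blast
    qed
    have incomparable: "\<not> le (q (e i)) (q (e j))" if "i \<noteq> j" for i j
      using that pair[of i j] pair[of j i] by (cases "i < j") auto
    have refl: "le x x" if "x \<in> P" for x
      using w that unfolding wqo_on_def quasi_order_on_def by blast
    have "inj (q \<circ> e)"
    proof (rule injI)
      fix i j assume "(q \<circ> e) i = (q \<circ> e) j"
      then show "i = j" using incomparable[of i j] refl[OF q] by auto
    qed
    then have "infinite (range (q \<circ> e))" by (rule range_inj_infinite)
    moreover have "\<forall>x\<in>range (q \<circ> e). \<forall>y\<in>range (q \<circ> e). x \<noteq> y \<longrightarrow> \<not> le x y"
    proof (intro ballI impI)
      fix x y assume "x \<in> range (q \<circ> e)" "y \<in> range (q \<circ> e)" "x \<noteq> y"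
      then obtain i j where "x = q (e i)" "y = q (e j)" "i \<noteq> j" by auto
      then show "\<not> le x y" using incomparable by blast
    qed
    moreover have "range (q \<circ> e) \<subseteq> P" using q by auto
    ultimately show False using no_antichain by blast
  qed
qed

definition downset_on :: "'a set \<Rightarrow> ('a \<Rightarrow> 'a \<Rightarrow> bool) \<Rightarrow> 'a set \<Rightarrow> bool" where
  "downset_on P le A \<longleftrightarrow> A \<subseteq> P \<and> (\<forall>x\<in>P. \<forall>y\<in>A. le x y \<longrightarrow> x \<in> A)"

lemma wqo_on_wf_psubset_downsets:
  assumes w: "wqo_on P le"
  shows "wf {(A, B). A \<subset> B \<and> downset_on P le A \<and> downset_on P le B}"
proof (unfold wf_iff_no_infinite_down_chain, rule notI)
  assume "\<exists>f. \<forall>i. (f (Suc i), f i) \<in> {(A, B). A \<subset> B \<and> downset_on P le A \<and> downset_on P le B}"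
  then obtain f where "\<forall>i. (f (Suc i), f i) \<in> {(A, B). A \<subset> B \<and> downset_on P le A \<and> downset_on P le B}"
    by blast
  then have f: "\<And>i. f (Suc i) \<subset> f i" "\<And>i. downset_on P le (f i)" by auto
  have f_anti: "f k \<subseteq> f j" if "j \<le> k" for j k
    using that by (induction k rule: dec_induct) (use f(1) in auto)
  have "\<forall>i. \<exists>y. y \<in> f i - f (Suc i)" using f(1) by blast
  then obtain x where x: "\<And>i. x i \<in> f i - f (Suc i)" by metis
  have "x i \<in> P" for i using x f(2) unfolding downset_on_def by blast
  then obtain i j where ij: "i < j" "le (x i) (x j)" using wqo_on_good_pair[OF w] by blast
  have "x j \<in> f (Suc i)" using x[of j] f_anti[of "Suc i" j] ij(1) by auto
  then have "x i \<in> f (Suc i)"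
    using ij(2) \<open>x i \<in> P\<close> f(2)[of "Suc i"] unfolding downset_on_def by blast
  then show False using x by blast
qed

lemma strict_mono_Inf_nested:
  fixes R :: "nat \<Rightarrow> nat set"
  assumes inf: "\<And>k. infinite (R k)" and nest: "\<And>k. R (Suc k) \<subseteq> R k \<inter> {Inf (R k)<..}"
  shows "strict_mono (\<lambda>k. Inf (R k))" "(\<lambda>j. Inf (R j)) ` {k..} \<subseteq> R k"
proof -
  have Inf_in: "Inf (R k) \<in> R k" for k
    using inf[of k] by (metis Inf_nat_def1 finite.emptyI)
  have anti: "R k \<subseteq> R j" if "j \<le> k" for j k
    using that by (induction k rule: dec_induct) (use nest in blast)+
  have "Inf (R k) < Inf (R (Suc k))" for k using Inf_in[of "Suc k"] nest[of k] by auto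
  then show "strict_mono (\<lambda>k. Inf (R k))" by (rule strict_mono_Suc_iff[THEN iffD2, rule_format])
  show "(\<lambda>j. Inf (R j)) ` {k..} \<subseteq> R k" using Inf_in anti by auto
qed

lemma strict_mono_image_atLeast:
  fixes m :: "nat \<Rightarrow> nat"
  assumes m: "strict_mono m"
  shows "infinite (m ` {k..})" "Inf (m ` {k..}) = m k" "m ` {k..} - {m k} = m ` {Suc k..}"
proof -
  show "infinite (m ` {k..})"
    using m infinite_Ici[of k] by (metis finite_imageD strict_mono_imp_inj_on)
  show "Inf (m ` {k..}) = m k"
    using m by (intro cInf_eq_minimum) (auto simp: strict_mono_less_eq)
  have "{Suc k..} = {k..} - {k}" by auto
  then show "m ` {k..} - {m k} = m ` {Suc k..}"
    using image_set_diff[OF strict_mono_imp_inj_on[OF m], of "{k..}" "{k}"] by simp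
qed

lemma fusion_finite:
  assumes mono: "\<And>s Y Y'. Q s Y \<Longrightarrow> Y' \<subseteq> Y \<Longrightarrow> infinite Y' \<Longrightarrow> Q s Y'"
    and dense: "\<And>s Y. s \<in> S \<Longrightarrow> infinite Y \<Longrightarrow> \<exists>Y'\<subseteq>Y. infinite Y' \<and> Q s Y'"
    and "finite S" "infinite Y"
  shows "\<exists>Y'\<subseteq>Y. infinite Y' \<and> (\<forall>s\<in>S. Q s Y')"
  using \<open>finite S\<close> dense \<open>infinite Y\<close>
proof (induction S arbitrary: Y rule: finite_induct)
  case (insert s S)
  have "\<exists>Y'\<subseteq>Y. infinite Y' \<and> Q s' Y'" if "s' \<in> S" "infinite Y" for s' Y
    using insert.prems(1) that by simp
  from insert.IH[OF this insert.prems(2)]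
  obtain Y1 where Y1: "Y1 \<subseteq> Y" "infinite Y1" "\<forall>s\<in>S. Q s Y1" by blast
  obtain Y2 where "Y2 \<subseteq> Y1" "infinite Y2" "Q s Y2"
    using insert.prems(1)[of s Y1] Y1(2) by blast
  then show ?case using Y1 mono by blast
qed blast

text \<open>Diagonal fusion: a property of pairs (finite set, infinite set) that is hereditary and
  dense in its second argument can be achieved simultaneously for all finite subsets of one set.\<close>

lemma fusion:
  fixes Q :: "nat set \<Rightarrow> nat set \<Rightarrow> bool"
  assumes mono: "\<And>s Y Y'. Q s Y \<Longrightarrow> Y' \<subseteq> Y \<Longrightarrow> infinite Y' \<Longrightarrow> Q s Y'"
    and dense: "\<And>s Y. finite s \<Longrightarrow> infinite Y \<Longrightarrow> \<exists>Y'\<subseteq>Y. infinite Y' \<and> Q s Y'"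
    and Y: "infinite Y"
  shows "\<exists>Z\<subseteq>Y. infinite Z \<and> (\<forall>s. finite s \<and> s \<subseteq> Z \<longrightarrow> Q s (Z \<inter> above s))"
proof -
  have step: "\<exists>R'. (infinite R' \<and> R' \<subseteq> Y \<and> Q {} R') \<and>
      R' \<subseteq> R \<inter> {Inf R<..} \<and> (\<forall>s\<subseteq>{..Inf R}. Q s R')"
    if "infinite R" "R \<subseteq> Y" for R
  proof -
    have "R - {..Inf R} \<subseteq> R \<inter> {Inf R<..}" by auto
    moreover have "infinite (R - {..Inf R})" using that(1) by simp
    ultimately have inf: "infinite (R \<inter> {Inf R<..})" by (meson finite_subset)
    have dense': "\<exists>Y'\<subseteq>Y. infinite Y' \<and> Q s Y'" if "s \<in> Pow {..Inf R}" "infinite Y" for s Y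
      using dense that finite_subset by blast
    have "\<exists>R'\<subseteq>R \<inter> {Inf R<..}. infinite R' \<and> (\<forall>s\<in>Pow {..Inf R}. Q s R')"
      by (rule fusion_finite[where Q = Q]) (fact mono, fact dense', simp, fact inf)
    then obtain R' where "R' \<subseteq> R \<inter> {Inf R<..}" "infinite R'" "\<forall>s\<in>Pow {..Inf R}. Q s R'"
      by blast
    then show ?thesis using that(2) by blast
  qed
  have start: "\<exists>R0. infinite R0 \<and> R0 \<subseteq> Y \<and> Q {} R0" using dense[of "{}" Y] Y by blast
  have "\<exists>R. \<forall>k. (infinite (R k) \<and> R k \<subseteq> Y \<and> Q {} (R k)) \<and>
      R (Suc k) \<subseteq> R k \<inter> {Inf (R k)<..} \<and> (\<forall>s\<subseteq>{..Inf (R k)}. Q s (R (Suc k)))"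
    by (rule dependent_nat_choice) (use start step in simp_all)
  then obtain R where R: "\<And>k. infinite (R k) \<and> R k \<subseteq> Y \<and> Q {} (R k)"
    and R_Suc: "\<And>k. R (Suc k) \<subseteq> R k \<inter> {Inf (R k)<..} \<and> (\<forall>s\<subseteq>{..Inf (R k)}. Q s (R (Suc k)))"
    by blast
  define m where "m k = Inf (R k)" for k
  have m: "strict_mono m" "\<And>k. m ` {k..} \<subseteq> R k"
    using strict_mono_Inf_nested[of R] R R_Suc unfolding m_def by blast+
  define Z where "Z = range m"
  have "Z \<subseteq> Y" "infinite Z"
    using m R strict_mono_image_atLeast(1)[OF m(1), of 0] unfolding Z_def by (auto simp: atLeast_0)
  moreover have "Q s (Z \<inter> above s)" if s: "finite s" "s \<subseteq> Z" for s
  proof (cases "s = {}")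
    case True
    have "Z \<subseteq> R 0" using m(2)[of 0] unfolding Z_def by (simp add: atLeast_0)
    then show ?thesis using mono[of "{}" "R 0" Z] R[of 0] \<open>infinite Z\<close> True by simp
  next
    case False
    then obtain k where k: "Max s = m k" using s Max_in unfolding Z_def by blast
    then have "s \<subseteq> {..Inf (R k)}" using s Max_ge[OF s(1)] by (auto simp: m_def)
    then have "Q s (R (Suc k))" using R_Suc by blast
    moreover have "Z \<inter> above s \<subseteq> R (Suc k)"
    proof
      fix x assume x: "x \<in> Z \<inter> above s"
      then obtain j where j: "x = m j" unfolding Z_def by blast
      have "Max s \<in> s" using s(1) False by simp
      then have "m k < m j" using x j k unfolding above_def by auto
      then have "j \<in> {Suc k..}" using m(1) by (simp add: strict_mono_less Suc_le_eq)
      then show "x \<in> R (Suc k)" using j m(2) by blast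
    qed
    ultimately show ?thesis using mono infinite_Int_above[OF \<open>infinite Z\<close> s(1)] by blast
  qed
  ultimately show ?thesis by blast
qed

definition accepts :: "nat set set \<Rightarrow> nat set \<Rightarrow> nat set \<Rightarrow> bool" where
  "accepts F s Y \<longleftrightarrow> (\<forall>X\<subseteq>Y. infinite X \<longrightarrow> (\<exists>u\<in>F. iseg u (s \<union> X)))"

definition rejects :: "nat set set \<Rightarrow> nat set \<Rightarrow> nat set \<Rightarrow> bool" where
  "rejects F s Y \<longleftrightarrow> (\<forall>Y'\<subseteq>Y. infinite Y' \<longrightarrow> \<not> accepts F s Y')"

lemma accepts_mono: "accepts F s Y \<Longrightarrow> Y' \<subseteq> Y \<Longrightarrow> accepts F s Y'"
  unfolding accepts_def by blast

lemma rejects_mono: "rejects F s Y \<Longrightarrow> Y' \<subseteq> Y \<Longrightarrow> rejects F s Y'"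
  unfolding rejects_def by blast

lemma rejects_finite_accepting_extensions:
  assumes rej: "rejects F s (Z \<inter> above s)"
  shows "finite {n \<in> Z \<inter> above s. accepts F (insert n s) (Z \<inter> above (insert n s))}"
    (is "finite ?N")
proof (rule ccontr)
  assume "infinite ?N"
  moreover have "accepts F s ?N"
    unfolding accepts_def[of F s]
  proof (intro allI impI)
    fix X assume X: "X \<subseteq> ?N" "infinite X"
    define n where "n = Inf X"
    have n: "n \<in> X" "\<And>x. x \<in> X \<Longrightarrow> n \<le> x"
      using X(2) unfolding n_def by (auto intro: wellorder_Inf_le1 Inf_nat_def1)
    then have "accepts F (insert n s) (Z \<inter> above (insert n s))" using X(1) by blast
    moreover have "X - {n} \<subseteq> Z \<inter> above (insert n s)"
      using X(1) n unfolding above_def by fastforce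
    moreover have "infinite (X - {n})" using X(2) by simp
    ultimately obtain u where "u \<in> F" "iseg u (insert n s \<union> (X - {n}))"
      unfolding accepts_def by blast
    moreover have "insert n s \<union> (X - {n}) = s \<union> X" using n(1) by auto
    ultimately show "\<exists>u\<in>F. iseg u (s \<union> X)" by auto
  qed
  moreover have "?N \<subseteq> Z \<inter> above s" by blast
  ultimately show False using rej unfolding rejects_def by (meson subset_refl)
qed

lemma rejecting_extension:
  assumes decided: "\<And>s. finite s \<Longrightarrow> s \<subseteq> Z \<Longrightarrow> accepts F s (Z \<inter> above s) \<or> rejects F s (Z \<inter> above s)"
    and Z: "infinite Z"
    and A: "finite A" "A \<subseteq> Z" "\<forall>s\<subseteq>A. rejects F s (Z \<inter> above s)"
  shows "\<exists>n\<in>Z \<inter> above A. \<forall>s\<subseteq>insert n A. rejects F s (Z \<inter> above s)"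
proof -
  define bad where
    "bad = (\<Union>s\<in>Pow A. {n \<in> Z \<inter> above s. accepts F (insert n s) (Z \<inter> above (insert n s))})"
  have "finite bad"
    unfolding bad_def
  proof (rule finite_UN_I)
    show "finite (Pow A)" using A(1) by simp
    fix s assume "s \<in> Pow A"
    then show "finite {n \<in> Z \<inter> above s. accepts F (insert n s) (Z \<inter> above (insert n s))}"
      using A(3) by (intro rejects_finite_accepting_extensions) blast
  qed
  then have "infinite (Z \<inter> above A - bad)" using infinite_Int_above[OF Z A(1)] by simp
  then obtain n where n: "n \<in> Z \<inter> above A" "n \<notin> bad" by (meson finite.emptyI finite_subset subsetI DiffE)
  have "rejects F (insert n s) (Z \<inter> above (insert n s))" if "s \<subseteq> A" for s
  proof -
    have "n \<in> Z \<inter> above s" using n(1) that unfolding above_def by blast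
    then have "\<not> accepts F (insert n s) (Z \<inter> above (insert n s))"
      using n(2) that unfolding bad_def by blast
    moreover have "finite (insert n s)" "insert n s \<subseteq> Z"
      using A n that finite_subset by auto
    ultimately show ?thesis using decided by blast
  qed
  then have "\<forall>s\<subseteq>insert n A. rejects F s (Z \<inter> above s)"
    using A(3) by (metis insert_Diff subset_insert_iff)
  then show ?thesis using n(1) by blast
qed

lemma finite_subset_UN_nested:
  fixes A :: "nat \<Rightarrow> 'a set"
  assumes inc: "\<And>k. A k \<subseteq> A (Suc k)" and "finite u" "u \<subseteq> (\<Union>k. A k)"
  shows "\<exists>k. u \<subseteq> A k"
  using \<open>finite u\<close> \<open>u \<subseteq> (\<Union>k. A k)\<close>
proof (induction u rule: finite_induct)
  case (insert x u)
  then obtain j k where "x \<in> A j" "u \<subseteq> A k" by blast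
  then have "insert x u \<subseteq> A (max j k)"
    using lift_Suc_mono_le[of A, OF inc] by (meson insert_subset max.cobounded1 max.cobounded2 subset_iff)
  then show ?case by blast
qed simp

lemma nash_williams_rejecting:
  assumes fin: "\<forall>u\<in>F. finite u" and Z: "infinite Z"
    and decided: "\<And>s. finite s \<Longrightarrow> s \<subseteq> Z \<Longrightarrow> accepts F s (Z \<inter> above s) \<or> rejects F s (Z \<inter> above s)"
    and rej: "rejects F {} Z"
  shows "\<exists>W\<subseteq>Z. infinite W \<and> (\<forall>u\<in>F. \<not> u \<subseteq> W)"
proof -
  let ?rejecting = "\<lambda>k A. finite A \<and> A \<subseteq> Z \<and> card A = k \<and> (\<forall>s\<subseteq>A. rejects F s (Z \<inter> above s))"
  have "\<exists>A. \<forall>k. ?rejecting k (A k) \<and> A k \<subseteq> A (Suc k)"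
  proof (rule dependent_nat_choice)
    show "\<exists>A. ?rejecting 0 A" using rej by (intro exI[of _ "{}"]) simp
    fix A k assume A: "?rejecting k A"
    have "\<exists>n\<in>Z \<inter> above A. \<forall>s\<subseteq>insert n A. rejects F s (Z \<inter> above s)"
      by (rule rejecting_extension) (fact decided, fact Z, use A in simp_all)
    then obtain n where n: "n \<in> Z \<inter> above A" "\<forall>s\<subseteq>insert n A. rejects F s (Z \<inter> above s)"
      by blast
    then have "n \<notin> A" unfolding above_def by blast
    have "?rejecting (Suc k) (insert n A)"
    proof (intro conjI)
      show "finite (insert n A)" "insert n A \<subseteq> Z" using A n(1) by auto
      show "card (insert n A) = Suc k" using A \<open>n \<notin> A\<close> by simp
    qed (fact n(2))
    then show "\<exists>A'. ?rejecting (Suc k) A' \<and> A \<subseteq> A'" by blast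
  qed
  then obtain A where "\<forall>k. ?rejecting k (A k) \<and> A k \<subseteq> A (Suc k)" ..
  then have A: "\<And>k. ?rejecting k (A k)" "\<And>k. A k \<subseteq> A (Suc k)" by simp_all
  define W where "W = (\<Union>k. A k)"
  have "W \<subseteq> Z" using A(1) unfolding W_def by blast
  moreover have "infinite W"
  proof
    assume "finite W"
    then have "card (A (Suc (card W))) \<le> card W"
      unfolding W_def by (meson UN_upper UNIV_I card_mono)
    then show False using A(1) by simp
  qed
  moreover have "\<not> u \<subseteq> W" if u: "u \<in> F" for u
  proof
    assume "u \<subseteq> W"
    moreover have "finite u" using u fin by blast
    ultimately obtain k where "u \<subseteq> A k"
      using finite_subset_UN_nested[of A, OF A(2)] unfolding W_def by blast
    then have "rejects F u (Z \<inter> above u)" using A(1) by blast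
    moreover have "accepts F u (Z \<inter> above u)"
      using iseg_Un_above_self[OF \<open>finite u\<close>] u unfolding accepts_def by blast
    ultimately show False
      using infinite_Int_above[OF Z \<open>finite u\<close>] unfolding rejects_def by blast
  qed
  ultimately show ?thesis by blast
qed

theorem nash_williams:
  assumes fin: "\<forall>u\<in>F. finite u" and Y: "infinite Y"
  shows "\<exists>Y'\<subseteq>Y. infinite Y' \<and>
    ((\<forall>u\<in>F. \<not> u \<subseteq> Y') \<or> (\<forall>X\<subseteq>Y'. infinite X \<longrightarrow> (\<exists>u\<in>F. iseg u X)))"
proof -
  let ?decided = "\<lambda>s Y. accepts F s Y \<or> rejects F s Y"
  have dense: "\<exists>Y'\<subseteq>Y. infinite Y' \<and> ?decided s Y'" if "infinite Y" for s Y
    using that unfolding rejects_def by blast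
  have "\<exists>Z\<subseteq>Y. infinite Z \<and> (\<forall>s. finite s \<and> s \<subseteq> Z \<longrightarrow> ?decided s (Z \<inter> above s))"
  proof (rule fusion[of ?decided])
    fix s Y0 Y' assume "?decided s Y0" "Y' \<subseteq> Y0" "infinite Y'"
    then show "?decided s Y'" using accepts_mono rejects_mono by blast
  next
    fix s Y0 :: "nat set" assume "infinite Y0"
    then show "\<exists>Y'\<subseteq>Y0. infinite Y' \<and> ?decided s Y'" by (rule dense)
  qed (fact Y)
  then obtain Z where Z: "Z \<subseteq> Y" "infinite Z"
    and decided: "\<And>s. finite s \<Longrightarrow> s \<subseteq> Z \<Longrightarrow> ?decided s (Z \<inter> above s)"
    by auto
  show ?thesis
  proof (cases "accepts F {} Z")
    case True
    then have "\<forall>X\<subseteq>Z. infinite X \<longrightarrow> (\<exists>u\<in>F. iseg u X)" unfolding accepts_def by simp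
    then show ?thesis using Z by blast
  next
    case False
    then have "rejects F {} Z" using decided[of "{}"] by simp
    have "\<exists>W\<subseteq>Z. infinite W \<and> (\<forall>u\<in>F. \<not> u \<subseteq> W)"
      by (rule nash_williams_rejecting) (fact fin, fact Z(2), fact decided, fact)
    then obtain W where "W \<subseteq> Z" "infinite W" "\<forall>u\<in>F. \<not> u \<subseteq> W" by blast
    then show ?thesis using Z(1) by blast
  qed
qed

definition barrier_on :: "nat set set \<Rightarrow> nat set \<Rightarrow> bool" where
  "barrier_on C Z \<longleftrightarrow> infinite Z \<and> (\<forall>s\<in>C. finite s \<and> s \<subseteq> Z) \<and> (\<forall>s\<in>C. \<forall>t\<in>C. \<not> s \<subset> t) \<and>
     (\<forall>X\<subseteq>Z. infinite X \<longrightarrow> (\<exists>s\<in>C. iseg s X))"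

lemma barrier_imp_barrier_on:
  assumes B: "barrier B"
  shows "barrier_on B (\<Union>B)"
proof -
  have "infinite (\<Union>B)"
  proof
    assume "finite (\<Union>B)"
    then have "finite B" by (meson Union_upper Pow_iff finite_Pow_iff finite_subset subsetI)
    then show False using B unfolding barrier_def by simp
  qed
  then show ?thesis using B unfolding barrier_def barrier_on_def by auto
qed

context
  fixes C :: "nat set set" and Z :: "nat set"
  assumes C: "barrier_on C Z"
begin

lemma barrier_on_finite: "s \<in> C \<Longrightarrow> finite s"
  and barrier_on_subset: "s \<in> C \<Longrightarrow> s \<subseteq> Z"
  and barrier_on_antichain: "s \<in> C \<Longrightarrow> t \<in> C \<Longrightarrow> \<not> s \<subset> t"
  and barrier_on_cover: "X \<subseteq> Z \<Longrightarrow> infinite X \<Longrightarrow> \<exists>s\<in>C. iseg s X"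
  and barrier_on_infinite: "infinite Z"
  using C unfolding barrier_on_def by blast+

lemma barrier_on_restrict:
  assumes "Z' \<subseteq> Z" "infinite Z'"
  shows "barrier_on {s\<in>C. s \<subseteq> Z'} Z'"
  unfolding barrier_on_def
proof (intro conjI ballI allI impI)
  fix X assume X: "X \<subseteq> Z'" "infinite X"
  then obtain s where "s \<in> C" "iseg s X" using barrier_on_cover assms(1) by (meson order_trans)
  then show "\<exists>s\<in>{s\<in>C. s \<subseteq> Z'}. iseg s X" using X(1) iseg_subset by blast
qed (use assms barrier_on_finite barrier_on_antichain in auto)

lemma barrier_on_unique:
  assumes "s \<in> C" "t \<in> C" "iseg s X" "iseg t X"
  shows "s = t"
  using iseg_linear[OF assms(3,4)] barrier_on_antichain[OF assms(1,2)]
    barrier_on_antichain[OF assms(2,1)] iseg_subset by blast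

lemma barrier_on_covering_subfamily:
  assumes cover: "\<forall>X\<subseteq>W. infinite X \<longrightarrow> (\<exists>u\<in>G. iseg u X)" and "G \<subseteq> C"
    and W: "W \<subseteq> Z" "infinite W" and s: "s \<in> C" "s \<subseteq> W"
  shows "s \<in> G"
proof -
  define X where "X = s \<union> (W \<inter> above s)"
  have "X \<subseteq> W" "infinite X"
    using s infinite_Int_above[OF W(2) barrier_on_finite[OF s(1)]] unfolding X_def by auto
  then obtain u where u: "u \<in> G" "iseg u X" using cover by blast
  have "iseg s X" using iseg_Un_above_self[OF barrier_on_finite[OF s(1)]] unfolding X_def by blast
  then show ?thesis using barrier_on_unique[OF _ s(1) u(2)] u assms(2) by blast
qed

context
  assumes nonempty: "{} \<notin> C"
begin

lemma barrier_on_imp_barrier: "barrier C"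
  unfolding barrier_def
proof (intro conjI ballI allI impI)
  show "infinite C"
  proof
    assume "finite C"
    then have "finite (\<Union>C)" using barrier_on_finite by blast
    then obtain s where s: "s \<in> C" "iseg s (Z \<inter> above (\<Union>C))"
      using barrier_on_cover infinite_Int_above[OF barrier_on_infinite] by (meson inf_le1)
    then obtain x where "x \<in> s" using nonempty by (metis ex_in_conv)
    then show False using s iseg_subset unfolding above_def by blast
  qed
  fix X assume "X \<subseteq> \<Union>C" "infinite X"
  then show "\<exists>s\<in>C. s \<noteq> {} \<and> iseg s X"
    using barrier_on_cover barrier_on_subset nonempty by (metis Union_least order_trans)
qed (use barrier_on_finite barrier_on_antichain in blast)+

lemma barrier_on_not_subset_Diff_Min:
  assumes "u \<in> C" "s \<in> C"
  shows "\<not> s \<subseteq> u - {Min u}"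
proof
  assume "s \<subseteq> u - {Min u}"
  moreover have "Min u \<in> u" using assms(1) nonempty barrier_on_finite Min_in by blast
  ultimately show False using barrier_on_antichain[OF assms(2,1)] by blast
qed

lemma barrier_on_shift_successor:
  assumes s: "s \<in> C" and Y: "Y \<subseteq> Z" "infinite Y" "Y \<subseteq> above s"
  shows "\<exists>t\<in>C. s \<lhd>\<^sub>B t \<and> t \<subseteq> (s - {Min s}) \<union> Y"
proof -
  let ?s' = "s - {Min s}"
  have fs: "finite s" "s \<noteq> {}" using barrier_on_finite[OF s] nonempty s by auto
  have Y': "Y \<subseteq> above ?s'" using Y(3) unfolding above_def by blast
  obtain t where t: "t \<in> C" "iseg t (?s' \<union> Y)"
    using barrier_on_cover[of "?s' \<union> Y"] barrier_on_subset[OF s] Y by auto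
  have "iseg ?s' (?s' \<union> Y)" using iseg_Un_above_self[OF _ Y'] fs by simp
  moreover have "\<not> t \<subseteq> ?s'" using barrier_on_not_subset_Diff_Min[OF s t(1)] .
  ultimately have "iseg ?s' t" "?s' \<noteq> t" using iseg_linear[OF _ t(2)] iseg_subset by blast+
  moreover have t_sub: "t \<subseteq> ?s' \<union> Y" using t(2) by (rule iseg_subset)
  moreover have "Min s < x" if "x \<in> t" for x
    using that t_sub Min_less_Diff_Min[OF fs(1)] Y(3) Min_in[OF fs] unfolding above_def by blast
  ultimately have "s \<lhd>\<^sub>B t"
    using fs barrier_on_finite[OF t(1)] by (simp add: shift_rel_nonempty_iff)
  then show ?thesis using t(1) t_sub by blast
qed

end

end

locale wqo_poset =
  fixes P :: "'a set" and le :: "'a \<Rightarrow> 'a \<Rightarrow> bool"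
  assumes poset: "poset_on P le" and wqo: "wqo_on P le"
begin

lemma refl: "x \<in> P \<Longrightarrow> le x x"
  using poset unfolding poset_on_def quasi_order_on_def by blast

lemma trans: "x \<in> P \<Longrightarrow> y \<in> P \<Longrightarrow> z \<in> P \<Longrightarrow> le x y \<Longrightarrow> le y z \<Longrightarrow> le x z"
  using poset unfolding poset_on_def quasi_order_on_def by blast

lemma antisym: "x \<in> P \<Longrightarrow> y \<in> P \<Longrightarrow> le x y \<Longrightarrow> le y x \<Longrightarrow> x = y"
  using poset unfolding poset_on_def by blast

definition principal_gen :: "'a set \<Rightarrow> 'a" where
  "principal_gen I = (SOME p. p \<in> P \<and> I = {y \<in> P. le y p})"

lemma principal_gen:
  assumes "principal_on P le I"
  shows "principal_gen I \<in> P" "I = {y \<in> P. le y (principal_gen I)}"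
proof -
  have "\<exists>p. p \<in> P \<and> I = {y \<in> P. le y p}" using assms unfolding principal_on_def by blast
  then have "principal_gen I \<in> P \<and> I = {y \<in> P. le y (principal_gen I)}"
    unfolding principal_gen_def by (rule someI_ex)
  then show "principal_gen I \<in> P" "I = {y \<in> P. le y (principal_gen I)}" by blast+
qed

definition bad_on :: "nat set set \<Rightarrow> nat set \<Rightarrow> (nat set \<Rightarrow> 'a) \<Rightarrow> bool" where
  "bad_on C Z h \<longleftrightarrow> barrier_on C Z \<and> h ` C \<subseteq> P \<and> \<not> good_map C le h"

lemma bad_on_restrict:
  assumes "bad_on C Z h" "Z' \<subseteq> Z" "infinite Z'"
  shows "bad_on {s\<in>C. s \<subseteq> Z'} Z' h"
proof -
  have "barrier_on {s\<in>C. s \<subseteq> Z'} Z'"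
    using assms barrier_on_restrict unfolding bad_on_def by blast
  moreover have "h ` {s\<in>C. s \<subseteq> Z'} \<subseteq> P" using assms(1) unfolding bad_on_def by blast
  moreover have "\<not> good_map {s\<in>C. s \<subseteq> Z'} le h"
    using assms(1) unfolding bad_on_def good_map_def by blast
  ultimately show ?thesis unfolding bad_on_def by blast
qed

end

locale bad_map = wqo_poset +
  fixes C :: "nat set set" and Z :: "nat set" and h :: "nat set \<Rightarrow> 'a"
  assumes bad: "bad_on C Z h"
begin

lemma barrier: "barrier_on C Z"
  and h_in: "s \<in> C \<Longrightarrow> h s \<in> P"
  and h_bad: "s \<in> C \<Longrightarrow> t \<in> C \<Longrightarrow> s \<lhd>\<^sub>B t \<Longrightarrow> \<not> le (h s) (h t)"
  using bad unfolding bad_on_def good_map_def by blast+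

lemma nonempty: "{} \<notin> C"
  using h_bad[OF _ _ shift_rel_empty] h_in refl by blast

lemma member_finite: "s \<in> C \<Longrightarrow> finite s"
  and member_subset: "s \<in> C \<Longrightarrow> s \<subseteq> Z"
  and member_Min: "s \<in> C \<Longrightarrow> Min s \<in> s"
  using barrier_on_finite[OF barrier] barrier_on_subset[OF barrier] nonempty
  by (auto intro: Min_in)

lemma exists_no_singletons: "\<exists>Z0\<subseteq>Z. infinite Z0 \<and> (\<forall>s\<in>C. s \<subseteq> Z0 \<longrightarrow> s - {Min s} \<noteq> {})"
proof -
  define F where "F = {s\<in>C. s - {Min s} = {}}"
  obtain Z0 where Z0: "Z0 \<subseteq> Z" "infinite Z0"
    and alt: "(\<forall>u\<in>F. \<not> u \<subseteq> Z0) \<or> (\<forall>X\<subseteq>Z0. infinite X \<longrightarrow> (\<exists>u\<in>F. iseg u X))"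
    using nash_williams[of F Z] member_finite barrier_on_infinite[OF barrier] unfolding F_def by blast
  show ?thesis
  proof (cases "\<forall>u\<in>F. \<not> u \<subseteq> Z0")
    case True
    then show ?thesis using Z0 unfolding F_def by blast
  next
    case False
    then have cover: "\<forall>X\<subseteq>Z0. infinite X \<longrightarrow> (\<exists>u\<in>F. iseg u X)" using alt by blast
    have singleton: "{a} \<in> C" if a: "a \<in> Z0" for a
    proof -
      define X where "X = insert a (Z0 \<inter> above {a})"
      have "X \<subseteq> Z0" "infinite X"
        using a infinite_Int_above[OF Z0(2), of "{a}"] unfolding X_def by auto
      then obtain u where u: "u \<in> C" "u - {Min u} = {}" "iseg u X"
        using cover unfolding F_def by blast
      have "Inf X = a" unfolding X_def above_def by (intro cInf_eq_minimum) auto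
      moreover have "u \<noteq> {}" using u(1) nonempty by blast
      ultimately have "Min u = a" using iseg_Min(2)[OF u(3)] by simp
      then show ?thesis using u member_Min by (metis Diff_eq_empty_iff insert_absorb subset_singletonD
            singleton_insert_inj_eq empty_iff)
    qed
    define e where "e = enumerate Z0"
    have e: "strict_mono e" "\<And>k. e k \<in> Z0"
      using Z0(2) strict_mono_enumerate enumerate_in_set unfolding e_def by auto
    obtain i j where "i < j" "le (h {e i}) (h {e j})"
      using wqo_on_good_pair[OF wqo, of "\<lambda>k. h {e k}"] h_in singleton e(2) by blast
    moreover have "{e i} \<lhd>\<^sub>B {e j}" using e(1) \<open>i < j\<close> by (simp add: shift_rel_singletons strict_monoD)
    ultimately show ?thesis using h_bad singleton e(2) by blast
  qed
qed

end

context bad_map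
begin

definition ext_downset :: "nat set \<Rightarrow> nat set \<Rightarrow> 'a set" where
  "ext_downset Y v = {p \<in> P. \<exists>t\<in>C. iseg v t \<and> v \<noteq> t \<and> t \<subseteq> v \<union> Y \<and> le p (h t)}"

lemma ext_downset_mono: "Y \<subseteq> Y' \<Longrightarrow> ext_downset Y v \<subseteq> ext_downset Y' v"
  unfolding ext_downset_def by blast

lemma ext_downset_Int_above: "ext_downset Y v = ext_downset (Y \<inter> above v) v"
proof
  show "ext_downset Y v \<subseteq> ext_downset (Y \<inter> above v) v"
    unfolding ext_downset_def using iseg_Diff_above by blast
qed (rule ext_downset_mono, blast)

lemma downset_on_ext_downset: "downset_on P le (ext_downset Y v)"
  unfolding downset_on_def ext_downset_def using trans h_in by blast

lemma h_in_ext_downset: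
  "t \<in> C \<Longrightarrow> iseg v t \<Longrightarrow> v \<noteq> t \<Longrightarrow> t \<subseteq> v \<union> Y \<Longrightarrow> h t \<in> ext_downset Y v"
  unfolding ext_downset_def using h_in refl by blast

definition stable :: "nat set \<Rightarrow> bool" where
  "stable Z1 \<longleftrightarrow>
    (\<forall>v Y. finite v \<and> v \<subseteq> Z1 \<and> Y \<subseteq> Z1 \<and> infinite Y \<longrightarrow> ext_downset Y v = ext_downset Z1 v)"

lemma exists_stable:
  assumes "infinite Y"
  shows "\<exists>Z1\<subseteq>Y. infinite Z1 \<and> stable Z1"
proof -
  define Q where "Q v Y \<longleftrightarrow> (\<forall>Y'\<subseteq>Y. infinite Y' \<longrightarrow> ext_downset Y' v = ext_downset Y v)" for v Y
  have dense: "\<exists>Y'\<subseteq>Y0. infinite Y' \<and> Q v Y'" if "infinite Y0" for v Y0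
  proof -
    let ?I = "{Y'. Y' \<subseteq> Y0 \<and> infinite Y'}"
    let ?R = "{(A, B). A \<subset> B \<and> downset_on P le A \<and> downset_on P le B}"
    have "ext_downset Y0 v \<in> (\<lambda>Y'. ext_downset Y' v) ` ?I" using that by blast
    then obtain A where A: "A \<in> (\<lambda>Y'. ext_downset Y' v) ` ?I"
      and min: "\<And>B. (B, A) \<in> ?R \<Longrightarrow> B \<notin> (\<lambda>Y'. ext_downset Y' v) ` ?I"
      by (rule wfE_min[OF wqo_on_wf_psubset_downsets[OF wqo]]) blast
    then obtain Y1 where Y1: "Y1 \<in> ?I" "A = ext_downset Y1 v" by blast
    have "Q v Y1"
      unfolding Q_def
    proof (intro allI impI)
      fix Y' assume Y': "Y' \<subseteq> Y1" "infinite Y'"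
      then have "ext_downset Y' v \<in> (\<lambda>Y'. ext_downset Y' v) ` ?I" using Y1 by blast
      then have "(ext_downset Y' v, ext_downset Y1 v) \<notin> ?R" using min Y1(2) by blast
      then show "ext_downset Y' v = ext_downset Y1 v"
        using ext_downset_mono[OF Y'(1)] downset_on_ext_downset by blast
    qed
    then show ?thesis using Y1(1) by blast
  qed
  have "\<exists>Z1\<subseteq>Y. infinite Z1 \<and> (\<forall>s. finite s \<and> s \<subseteq> Z1 \<longrightarrow> Q s (Z1 \<inter> above s))"
  proof (rule fusion[of Q])
    fix s Y0 Y' assume "Q s Y0" "Y' \<subseteq> Y0" "infinite Y'"
    then show "Q s Y'" unfolding Q_def by (metis order_trans)
  next
    fix s Y0 :: "nat set" assume "infinite Y0"
    then show "\<exists>Y'\<subseteq>Y0. infinite Y' \<and> Q s Y'" by (rule dense)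
  qed (fact assms)
  then obtain Z1 where Z1: "Z1 \<subseteq> Y" "infinite Z1"
    and Q_all: "\<forall>s. finite s \<and> s \<subseteq> Z1 \<longrightarrow> Q s (Z1 \<inter> above s)" by (elim exE conjE)
  have Q: "Q s (Z1 \<inter> above s)" if "finite s" "s \<subseteq> Z1" for s using Q_all that by simp
  have "stable Z1"
    unfolding stable_def
  proof (intro allI impI, elim conjE)
    fix v Y' assume v: "finite v" "v \<subseteq> Z1" and Y': "Y' \<subseteq> Z1" "infinite Y'"
    have "ext_downset Y' v = ext_downset (Y' \<inter> above v) v" by (rule ext_downset_Int_above)
    also have "\<dots> = ext_downset (Z1 \<inter> above v) v"
      using Q[OF v, unfolded Q_def, rule_format, of "Y' \<inter> above v"] Y'(1)
        infinite_Int_above[OF Y'(2) v(1)] by blast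
    also have "\<dots> = ext_downset Z1 v" by (rule ext_downset_Int_above[symmetric])
    finally show "ext_downset Y' v = ext_downset Z1 v" .
  qed
  then show ?thesis using Z1 by blast
qed

lemma ext_downset_cofinal:
  assumes stable: "stable Z1" and v: "finite v" "v \<subseteq> Z1"
    and x: "x \<in> ext_downset Z1 v" and Y: "Y \<subseteq> Z1 \<inter> above v" "infinite Y"
  shows "\<exists>Y'\<subseteq>Y. infinite Y' \<and>
    (\<forall>X\<subseteq>Y'. infinite X \<longrightarrow> (\<exists>t\<in>C. iseg v t \<and> v \<noteq> t \<and> iseg t (v \<union> X) \<and> le x (h t)))"
proof -
  define F where "F = {t - v | t. t \<in> C \<and> iseg v t \<and> v \<noteq> t \<and> le x (h t)}"
  have "\<forall>u\<in>F. finite u" using member_finite unfolding F_def by blast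
  from nash_williams[OF this Y(2)] obtain Y' where Y': "Y' \<subseteq> Y" "infinite Y'"
    and alt: "(\<forall>u\<in>F. \<not> u \<subseteq> Y') \<or> (\<forall>X\<subseteq>Y'. infinite X \<longrightarrow> (\<exists>u\<in>F. iseg u X))"
    by blast
  have "\<not> (\<forall>u\<in>F. \<not> u \<subseteq> Y')"
  proof -
    have "x \<in> ext_downset Y' v" using stable v x Y Y' unfolding stable_def by auto
    then obtain t where t: "t \<in> C" "iseg v t" "v \<noteq> t" "t \<subseteq> v \<union> Y'" "le x (h t)"
      unfolding ext_downset_def by blast
    then have "t - v \<in> F" unfolding F_def by blast
    moreover have "t - v \<subseteq> Y'" using t(4) by blast
    ultimately show ?thesis by blast
  qed
  then have cover: "\<forall>X\<subseteq>Y'. infinite X \<longrightarrow> (\<exists>u\<in>F. iseg u X)" using alt by blast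
  have "\<exists>t\<in>C. iseg v t \<and> v \<noteq> t \<and> iseg t (v \<union> X) \<and> le x (h t)"
    if X: "X \<subseteq> Y'" "infinite X" for X
  proof -
    obtain t where t: "t \<in> C" "iseg v t" "v \<noteq> t" "le x (h t)" "iseg (t - v) X"
      using cover X unfolding F_def by blast
    have "t = v \<union> (t - v)" using iseg_subset[OF t(2)] by blast
    moreover have "X \<subseteq> above v" using X(1) Y'(1) Y(1) by blast
    ultimately have "iseg t (v \<union> X)" using iseg_Un_above[OF v(1) _ t(5)] by metis
    then show ?thesis using t by blast
  qed
  then show ?thesis using Y' by blast
qed

lemma ext_downset_ideal:
  assumes stable: "stable Z1" "infinite Z1" and v: "finite v" "v \<subseteq> Z1"
    and ne: "ext_downset Z1 v \<noteq> {}"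
  shows "ideal_on P le (ext_downset Z1 v)"
proof -
  have "\<exists>z\<in>ext_downset Z1 v. le x z \<and> le y z"
    if xy: "x \<in> ext_downset Z1 v" "y \<in> ext_downset Z1 v" for x y
  proof -
    have Y: "Z1 \<inter> above v \<subseteq> Z1 \<inter> above v" "infinite (Z1 \<inter> above v)"
      using infinite_Int_above[OF stable(2) v(1)] by auto
    obtain Y1 where Y1: "Y1 \<subseteq> Z1 \<inter> above v" "infinite Y1"
      and x: "\<forall>X\<subseteq>Y1. infinite X \<longrightarrow> (\<exists>t\<in>C. iseg v t \<and> v \<noteq> t \<and> iseg t (v \<union> X) \<and> le x (h t))"
      using ext_downset_cofinal[OF stable(1) v xy(1) Y] by blast
    obtain Y2 where Y2: "Y2 \<subseteq> Y1" "infinite Y2"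
      and y: "\<forall>X\<subseteq>Y2. infinite X \<longrightarrow> (\<exists>t\<in>C. iseg v t \<and> v \<noteq> t \<and> iseg t (v \<union> X) \<and> le y (h t))"
      using ext_downset_cofinal[OF stable(1) v xy(2) Y1] by blast
    from x[rule_format, OF Y2(1,2)]
    obtain t1 where t1: "t1 \<in> C" "iseg v t1" "v \<noteq> t1" "iseg t1 (v \<union> Y2)" "le x (h t1)"
      by blast
    from y[rule_format, OF subset_refl Y2(2)]
    obtain t2 where t2: "t2 \<in> C" "iseg t2 (v \<union> Y2)" "le y (h t2)"
      by blast
    have "t1 = t2" using barrier_on_unique[OF barrier t1(1) t2(1) t1(4) t2(2)] .
    moreover have "h t1 \<in> ext_downset Z1 v"
      using t1 iseg_subset[OF t1(4)] Y2 Y1 by (intro h_in_ext_downset) auto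
    ultimately show ?thesis using t1 t2 by blast
  qed
  then show ?thesis
    using ne downset_on_ext_downset unfolding ideal_on_def downset_on_def by blast
qed

end

context bad_map
begin

lemma ext_downset_Diff_Min_not_subset:
  assumes stable: "stable Z1" "infinite Z1"
    and s: "s \<in> C" "s \<subseteq> Z1" and t: "t \<in> C" "t \<subseteq> Z1" and st: "s \<lhd>\<^sub>B t"
  shows "\<not> ext_downset Z1 (s - {Min s}) \<subseteq> ext_downset Z1 (t - {Min t})"
proof
  assume sub: "ext_downset Z1 (s - {Min s}) \<subseteq> ext_downset Z1 (t - {Min t})"
  have "s \<noteq> {}" "t \<noteq> {}" using s t nonempty by auto
  then have "iseg (s - {Min s}) t" "s - {Min s} \<noteq> t"
    using st by (simp_all add: shift_rel_nonempty_iff)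
  then have "h t \<in> ext_downset Z1 (s - {Min s})" using t by (intro h_in_ext_downset) auto
  with sub have "h t \<in> ext_downset Z1 (t - {Min t})" by blast
  moreover have "ext_downset (Z1 \<inter> above t) (t - {Min t}) = ext_downset Z1 (t - {Min t})"
    using stable t member_finite infinite_Int_above[OF stable(2), of t] unfolding stable_def
    by (meson Diff_subset finite_Diff inf_le1 order_trans)
  ultimately obtain u where u: "u \<in> C" "iseg (t - {Min t}) u" "t - {Min t} \<noteq> u"
    "u \<subseteq> (t - {Min t}) \<union> (Z1 \<inter> above t)" "le (h t) (h u)"
    unfolding ext_downset_def by blast
  have "Min t < x" if "x \<in> u" for x
    using that u(4) Min_less_Diff_Min[OF member_finite[OF t(1)]] member_Min[OF t(1)]
    unfolding above_def by blast
  then have "t \<lhd>\<^sub>B u"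
    using u \<open>t \<noteq> {}\<close> member_finite t(1) by (simp add: shift_rel_nonempty_iff)
  then show False using h_bad[OF t(1) u(1)] u(5) by blast
qed

lemma ext_downset_Diff_Min_ideal:
  assumes stable: "stable Z1" "infinite Z1" and Z1: "Z1 \<subseteq> Z" and s: "s \<in> C" "s \<subseteq> Z1"
  shows "ideal_on P le (ext_downset Z1 (s - {Min s}))"
proof (rule ext_downset_ideal[OF stable])
  obtain t where t: "t \<in> C" "s \<lhd>\<^sub>B t" "t \<subseteq> (s - {Min s}) \<union> (Z1 \<inter> above s)"
    using barrier_on_shift_successor[OF barrier nonempty s(1), of "Z1 \<inter> above s"] Z1
      infinite_Int_above[OF stable(2) member_finite[OF s(1)]] by blast
  have "s \<noteq> {}" using s nonempty by blast
  then have "iseg (s - {Min s}) t" "s - {Min s} \<noteq> t"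
    using t(2) by (simp_all add: shift_rel_nonempty_iff)
  then have "h t \<in> ext_downset Z1 (s - {Min s})" using t(1,3) by (intro h_in_ext_downset) auto
  then show "ext_downset Z1 (s - {Min s}) \<noteq> {}" by blast
qed (use s member_finite in auto)

lemma exists_principal:
  assumes H: "bqo_on (nonprincipal_ideals P le) (\<subseteq>)"
    and Z1: "Z1 \<subseteq> Z" "infinite Z1" "stable Z1"
  shows "\<exists>Z2\<subseteq>Z1. infinite Z2 \<and> (\<forall>s\<in>C. s \<subseteq> Z2 \<longrightarrow> principal_on P le (ext_downset Z1 (s - {Min s})))"
proof -
  let ?g = "\<lambda>s. ext_downset Z1 (s - {Min s})"
  define A where "A = {s\<in>C. s \<subseteq> Z1 \<and> \<not> principal_on P le (?g s)}"
  have "\<forall>u\<in>A. finite u" using member_finite unfolding A_def by blast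
  from nash_williams[OF this Z1(2)] obtain Z2 where Z2: "Z2 \<subseteq> Z1" "infinite Z2"
    and alt: "(\<forall>u\<in>A. \<not> u \<subseteq> Z2) \<or> (\<forall>X\<subseteq>Z2. infinite X \<longrightarrow> (\<exists>u\<in>A. iseg u X))"
    by (elim exE conjE)
  have "\<not> (\<forall>X\<subseteq>Z2. infinite X \<longrightarrow> (\<exists>u\<in>A. iseg u X))"
  proof
    assume cover: "\<forall>X\<subseteq>Z2. infinite X \<longrightarrow> (\<exists>u\<in>A. iseg u X)"
    define C2 where "C2 = {s\<in>C. s \<subseteq> Z2}"
    have C2A: "C2 \<subseteq> A"
      using barrier_on_covering_subfamily[OF barrier cover _ _ Z2(2)] Z1(1) Z2(1)
      unfolding C2_def A_def by blast
    have "barrier_on C2 Z2"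
      unfolding C2_def using barrier_on_restrict[OF barrier] Z1(1) Z2 by blast
    then have C2: "barrier C2"
      using barrier_on_imp_barrier nonempty unfolding C2_def by blast
    have "?g ` C2 \<subseteq> nonprincipal_ideals P le"
      using C2A ext_downset_Diff_Min_ideal[OF Z1(3,2,1)]
      unfolding nonprincipal_ideals_def A_def by blast
    from bqo_on_good_map[OF H C2 this]
    obtain s t where st: "s \<in> C2" "t \<in> C2" "s \<lhd>\<^sub>B t" "?g s \<subseteq> ?g t"
      unfolding good_map_def by blast
    then have "s \<in> C" "s \<subseteq> Z1" "t \<in> C" "t \<subseteq> Z1" using C2A unfolding A_def by blast+
    then show False using ext_downset_Diff_Min_not_subset[OF Z1(3,2)] st(3,4) by blast
  qed
  with alt have "\<forall>u\<in>A. \<not> u \<subseteq> Z2" by blast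
  then have "principal_on P le (?g s)" if "s \<in> C" "s \<subseteq> Z2" for s
    using that Z2(1) unfolding A_def by blast
  then show ?thesis using Z2 by blast
qed

end

locale principal_bad_map = bad_map +
  fixes Z1 Z2 :: "nat set"
  assumes Z1: "Z1 \<subseteq> Z" "infinite Z1" "stable Z1"
    and Z2: "Z2 \<subseteq> Z1" "infinite Z2"
    and nonsingleton: "\<And>s. s \<in> C \<Longrightarrow> s \<subseteq> Z2 \<Longrightarrow> s - {Min s} \<noteq> {}"
    and principal: "\<And>s. s \<in> C \<Longrightarrow> s \<subseteq> Z2 \<Longrightarrow> principal_on P le (ext_downset Z1 (s - {Min s}))"
begin

definition shifts :: "nat set \<Rightarrow> nat set set" where
  "shifts W = {s - {Min s} | s. s \<in> C \<and> s \<subseteq> W}"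

definition top :: "nat set \<Rightarrow> 'a" where
  "top v = principal_gen (ext_downset Z1 v)"

lemma shifts_mono: "W \<subseteq> W' \<Longrightarrow> shifts W \<subseteq> shifts W'"
  unfolding shifts_def by blast

lemma shifts_finite: "v \<in> shifts W \<Longrightarrow> finite v"
  and shifts_subset: "v \<in> shifts W \<Longrightarrow> v \<subseteq> W"
  unfolding shifts_def using member_finite by auto

lemma shifts_nonempty: "W \<subseteq> Z2 \<Longrightarrow> v \<in> shifts W \<Longrightarrow> v \<noteq> {}"
  unfolding shifts_def using nonsingleton by blast

lemma top:
  assumes "v \<in> shifts Z2"
  shows "top v \<in> P" "ext_downset Z1 v = {y \<in> P. le y (top v)}"
  using assms principal principal_gen unfolding shifts_def top_def by blast+

lemma top_upper:
  assumes "v \<in> shifts Z2" "t \<in> C" "iseg v t" "v \<noteq> t" "t \<subseteq> Z1"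
  shows "le (h t) (top v)"
proof -
  have "h t \<in> ext_downset Z1 v" using assms(2-5) by (intro h_in_ext_downset) auto
  then show ?thesis using top(2)[OF assms(1)] by blast
qed

lemma top_attained:
  assumes v: "v \<in> shifts Z2" and Y: "Y \<subseteq> Z1" "infinite Y"
  shows "\<exists>t\<in>C. iseg v t \<and> v \<noteq> t \<and> t \<subseteq> v \<union> Y \<and> le (top v) (h t)"
proof -
  have "top v \<in> ext_downset Z1 v" using top[OF v] refl by blast
  moreover have "ext_downset Y v = ext_downset Z1 v"
    using Z1(3) shifts_finite[OF v] shifts_subset[OF v] Z2(1) Y unfolding stable_def by blast
  ultimately show ?thesis unfolding ext_downset_def by blast
qed

lemma top_antimono:
  assumes v: "v \<in> shifts Z2" and w: "w \<in> shifts Z2" and vw: "iseg v w"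
  shows "le (top w) (top v)"
proof -
  have "top w \<in> ext_downset Z1 w" using top[OF w] refl by blast
  then obtain t where t: "t \<in> C" "iseg w t" "w \<noteq> t" "t \<subseteq> w \<union> Z1" "le (top w) (h t)"
    unfolding ext_downset_def by blast
  have "iseg v t" using iseg_trans[OF vw t(2)] .
  moreover have "v \<noteq> t" using t(2,3) vw iseg_subset by blast
  moreover have "t \<subseteq> Z1" using t(4) shifts_subset[OF w] Z2(1) by blast
  ultimately have "le (h t) (top v)" using top_upper[OF v t(1)] by blast
  then show ?thesis using trans[OF top(1)[OF w] h_in[OF t(1)] top(1)[OF v] t(5)] by blast
qed

end

context principal_bad_map
begin

definition coherent :: "nat set \<Rightarrow> bool" where
  "coherent W \<longleftrightarrow> (\<forall>t\<in>C. t \<subseteq> W \<longrightarrow> (\<forall>v\<in>shifts Z2. iseg v t \<and> v \<noteq> t \<longrightarrow> top v = h t))"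

lemma incoherent_nowhere:
  assumes W: "W \<subseteq> Z2" "infinite W"
    and incoherent: "\<And>t. t \<in> C \<Longrightarrow> t \<subseteq> W \<Longrightarrow> \<exists>v\<in>shifts Z2. iseg v t \<and> v \<noteq> t \<and> top v \<noteq> h t"
  shows "v \<in> shifts Z2 \<Longrightarrow> \<not> v \<subseteq> W"
proof (induction "card v" arbitrary: v rule: less_induct)
  case less
  show ?case
  proof
    assume vW: "v \<subseteq> W"
    have fin: "finite v" using shifts_finite[OF less.prems] .
    obtain t where t: "t \<in> C" "iseg v t" "v \<noteq> t" "t \<subseteq> v \<union> (W \<inter> above v)" "le (top v) (h t)"
      using top_attained[OF less.prems, of "W \<inter> above v"] W Z2(1) infinite_Int_above[OF W(2) fin]
      by blast
    have tW: "t \<subseteq> W" using t(4) vW by blast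
    then have tZ1: "t \<subseteq> Z1" using W(1) Z2(1) by blast
    have eq: "h t = top v"
      using antisym[OF h_in[OF t(1)] top(1)[OF less.prems]] top_upper[OF less.prems t(1-3) tZ1] t(5)
      by blast
    obtain w where w: "w \<in> shifts Z2" "iseg w t" "w \<noteq> t" "top w \<noteq> h t"
      using incoherent[OF t(1) tW] by blast
    consider "iseg v w" | "iseg w v" using iseg_linear[OF t(2) w(2)] by blast
    then show False
    proof cases
      case 1
      then have "le (top w) (top v)" using top_antimono[OF less.prems w(1)] by blast
      moreover have "le (h t) (top w)"
        using top_upper[OF w(1) t(1) w(2,3) tZ1] .
      ultimately have "top w = h t"
        using antisym[OF top(1)[OF w(1)] h_in[OF t(1)]] eq by simp
      then show False using w(4) by blast
    next
      case 2
      have "w \<noteq> v" using w(4) eq by auto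
      then have "w \<subset> v" using 2 iseg_subset by blast
      then have "card w < card v" using fin psubset_card_mono by blast
      moreover have "w \<subseteq> W" using \<open>w \<subset> v\<close> vW by blast
      ultimately show False using less.hyps w(1) by blast
    qed
  qed
qed

lemma exists_coherent: "\<exists>Z3\<subseteq>Z2. infinite Z3 \<and> coherent Z3"
proof -
  define A where "A = {t\<in>C. t \<subseteq> Z2 \<and> (\<forall>v\<in>shifts Z2. iseg v t \<and> v \<noteq> t \<longrightarrow> top v = h t)}"
  have "\<forall>u\<in>A. finite u" using member_finite unfolding A_def by blast
  from nash_williams[OF this Z2(2)] obtain Z3 where Z3: "Z3 \<subseteq> Z2" "infinite Z3"
    and alt: "(\<forall>u\<in>A. \<not> u \<subseteq> Z3) \<or> (\<forall>X\<subseteq>Z3. infinite X \<longrightarrow> (\<exists>u\<in>A. iseg u X))"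
    by (elim exE conjE)
  have Z3Z: "Z3 \<subseteq> Z" using Z3(1) Z2(1) Z1(1) by blast
  show ?thesis
  proof (cases "\<forall>u\<in>A. \<not> u \<subseteq> Z3")
    case True
    then have "\<exists>v\<in>shifts Z2. iseg v t \<and> v \<noteq> t \<and> top v \<noteq> h t" if "t \<in> C" "t \<subseteq> Z3" for t
      using that Z3(1) unfolding A_def by blast
    note nowhere = incoherent_nowhere[OF Z3 this]
    obtain s where "s \<in> C" "iseg s Z3" using barrier_on_cover[OF barrier Z3Z Z3(2)] by blast
    then have "s - {Min s} \<in> shifts Z2" "s - {Min s} \<subseteq> Z3"
      using iseg_subset Z3(1) unfolding shifts_def by blast+
    then show ?thesis using nowhere by blast
  next
    case False
    then have cover: "\<forall>X\<subseteq>Z3. infinite X \<longrightarrow> (\<exists>u\<in>A. iseg u X)" using alt by blast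
    have "t \<in> A" if "t \<in> C" "t \<subseteq> Z3" for t
      using barrier_on_covering_subfamily[OF barrier cover _ Z3Z Z3(2) that] unfolding A_def by blast
    then have "coherent Z3" unfolding coherent_def A_def by blast
    then show ?thesis using Z3 by blast
  qed
qed

end

context principal_bad_map
begin

lemma shift_rel_extends_to_members:
  assumes W: "W \<subseteq> Z2" "infinite W" and c: "c1 \<in> shifts W" "c2 \<in> shifts W" "c1 \<lhd>\<^sub>B c2"
  shows "\<exists>s\<in>C. \<exists>t\<in>C. s \<subseteq> W \<and> t \<subseteq> W \<and> iseg c1 s \<and> c1 \<noteq> s \<and> iseg c2 t \<and> c2 \<noteq> t \<and> s \<lhd>\<^sub>B t"
proof -
  have WZ: "W \<subseteq> Z" using W(1) Z2(1) Z1(1) by blast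
  obtain u1 u2 where u: "u1 \<in> C" "c1 = u1 - {Min u1}" "u2 \<in> C" "c2 = u2 - {Min u2}"
    using c(1,2) unfolding shifts_def by blast
  have ne: "c1 \<noteq> {}" "c2 \<noteq> {}" using shifts_nonempty W(1) c by blast+
  have fin: "finite c1" "finite c2" using shifts_finite c by blast+
  have cW: "c1 \<subseteq> W" "c2 \<subseteq> W" using shifts_subset c by blast+
  define m where "m = Min c1"
  have m: "m \<in> c1" "\<forall>x\<in>c2. m < x" "iseg (c1 - {m}) c2"
    using c(3) ne(1) fin(1) unfolding m_def by (auto simp: shift_rel_nonempty_iff)
  define T where "T = c2 \<union> (W \<inter> above c2)"
  have T: "iseg c2 T" "T \<subseteq> W" "infinite T" "T \<subseteq> above {m}"
  proof -
    show "iseg c2 T" unfolding T_def by (rule iseg_Un_above_self[OF fin(2)]) blast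
    show "T \<subseteq> W" "infinite T"
      unfolding T_def using cW infinite_Int_above[OF W(2) fin(2)] by auto
    show "T \<subseteq> above {m}"
      unfolding T_def above_def using m(2) ne(2) by (auto intro: less_trans)
  qed
  have mT: "m \<notin> T" using T(4) unfolding above_def by blast
  have "insert m T \<subseteq> Z" "infinite (insert m T)" using T(2,3) WZ m(1) cW(1) by auto
  from barrier_on_cover[OF barrier this] obtain s where s: "s \<in> C" "iseg s (insert m T)" by blast
  have "T \<subseteq> Z" using T(2) WZ by blast
  from barrier_on_cover[OF barrier this T(3)] obtain t where t: "t \<in> C" "iseg t T" by blast
  have c1s: "iseg c1 s" "c1 \<noteq> s"
    using iseg_linear[OF shift_rel_iseg_insert_Min[OF c(3) ne(1) T(1,4)[unfolded m_def]] s(2)[unfolded m_def]]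
      barrier_on_not_subset_Diff_Min[OF barrier nonempty u(1) s(1)] u(2) iseg_subset by blast+
  have c2t: "iseg c2 t" "c2 \<noteq> t"
    using iseg_linear[OF T(1) t(2)] barrier_on_not_subset_Diff_Min[OF barrier nonempty u(3) t(1)]
      u(4) iseg_subset by blast+
  have Min_s: "Min s = m"
  proof -
    have "Inf (insert m T) = m"
      using T(4) unfolding above_def by (intro cInf_eq_minimum) (auto simp: less_imp_le)
    then show ?thesis using iseg_Min(2)[OF s(2)] s(1) nonempty by force
  qed
  have "iseg (s - {m}) T"
    using iseg_Diff_Min[OF s(2)] s(1) nonempty mT Min_s by force
  then have "iseg (s - {m}) t" "s - {m} \<noteq> t"
    using iseg_linear[OF _ t(2)] barrier_on_not_subset_Diff_Min[OF barrier nonempty s(1) t(1)]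
      Min_s iseg_subset by blast+
  moreover have "\<forall>x\<in>t. m < x" using iseg_subset[OF t(2)] T(4) unfolding above_def by blast
  moreover have "s \<noteq> {}" using s(1) nonempty by blast
  ultimately have "s \<lhd>\<^sub>B t"
    unfolding shift_rel_nonempty_iff[OF \<open>s \<noteq> {}\<close>] Min_s using member_finite s(1) t(1) by blast
  moreover have "s \<subseteq> W" "t \<subseteq> W"
    using iseg_subset[OF s(2)] iseg_subset[OF t(2)] T(2) m(1) cW(1) by blast+
  ultimately show ?thesis using s(1) t(1) c1s c2t by blast
qed

lemma top_bad:
  assumes W: "W \<subseteq> Z2" "infinite W" "coherent W"
    and c: "c1 \<in> shifts W" "c2 \<in> shifts W" "c1 \<lhd>\<^sub>B c2"
  shows "\<not> le (top c1) (top c2)"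
proof -
  obtain s t where st: "s \<in> C" "t \<in> C" "s \<subseteq> W" "t \<subseteq> W" "iseg c1 s" "c1 \<noteq> s"
      "iseg c2 t" "c2 \<noteq> t" "s \<lhd>\<^sub>B t"
    using shift_rel_extends_to_members[OF W(1,2) c] by blast
  have "c1 \<in> shifts Z2" "c2 \<in> shifts Z2" using c shifts_mono[OF W(1)] by blast+
  then have "top c1 = h s" "top c2 = h t" using W(3) st unfolding coherent_def by blast+
  then show ?thesis using h_bad[OF st(1,2,9)] by simp
qed

end

definition shorter_on :: "nat set set \<Rightarrow> nat set set \<Rightarrow> nat set \<Rightarrow> bool" where
  "shorter_on C C' Z' \<longleftrightarrow> (\<forall>X\<subseteq>Z'. infinite X \<longrightarrow>
     (\<forall>c\<in>C. \<forall>c'\<in>C'. iseg c X \<longrightarrow> iseg c' (X - {Inf X}) \<longrightarrow> card c' < card c))"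

lemma card_least_imp_eq: "finite w \<Longrightarrow> w' \<subseteq> w \<Longrightarrow> card w \<le> card w' \<Longrightarrow> w' = w"
  by (metis card_mono card_subset_eq le_antisym)

context principal_bad_map
begin

definition shortest_shifts :: "nat set \<Rightarrow> nat set set" where
  "shortest_shifts W = {v \<in> shifts W. \<forall>w\<in>shifts W. iseg w v \<longrightarrow> w = v}"

definition minimal_shifts :: "nat set \<Rightarrow> nat set set" where
  "minimal_shifts W = {v \<in> shortest_shifts W. \<forall>w\<in>shortest_shifts W. w \<subseteq> v \<longrightarrow> w = v}"

lemma shortest_shifts_cover:
  assumes W: "W \<subseteq> Z" "infinite W" and X: "X \<subseteq> W - {Inf W}" "infinite X"
  shows "\<exists>v\<in>shortest_shifts W. iseg v X"
proof -
  let ?z = "Inf W"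
  have z: "?z \<in> W" "\<And>x. x \<in> W \<Longrightarrow> ?z \<le> x"
    using W(2) by (auto intro: Inf_nat_def1 wellorder_Inf_le1)
  have "insert ?z X \<subseteq> Z" "infinite (insert ?z X)" using X W(1) z(1) by auto
  from barrier_on_cover[OF barrier this] obtain s where s: "s \<in> C" "iseg s (insert ?z X)" by blast
  have "Inf (insert ?z X) = ?z" using X(1) z by (intro cInf_eq_minimum) auto
  then have "Min s = ?z" using iseg_Min(2)[OF s(2)] s(1) nonempty by force
  then have "iseg (s - {Min s}) X" using iseg_Diff_Min[OF s(2)] s(1) nonempty X(1) by force
  moreover have "s \<subseteq> W" using iseg_subset[OF s(2)] X(1) z(1) by blast
  ultimately have "s - {Min s} \<in> shifts W \<and> iseg (s - {Min s}) X"
    using s(1) unfolding shifts_def by blast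
  from ex_has_least_nat[of "\<lambda>v. v \<in> shifts W \<and> iseg v X", OF this, of card]
  obtain v where v: "v \<in> shifts W" "iseg v X"
    and least: "\<And>w. w \<in> shifts W \<Longrightarrow> iseg w X \<Longrightarrow> card v \<le> card w"
    by blast
  have "v \<in> shortest_shifts W"
    unfolding shortest_shifts_def
  proof (intro CollectI conjI ballI impI)
    fix w assume w: "w \<in> shifts W" "iseg w v"
    have "card v \<le> card w" using least[OF w(1) iseg_trans[OF w(2) v(2)]] .
    then show "w = v" using card_least_imp_eq[OF shifts_finite[OF v(1)] iseg_subset[OF w(2)]] by blast
  qed (fact v(1))
  then show ?thesis using v(2) by blast
qed

lemma exists_minimal_shifts_cover:
  assumes W: "W \<subseteq> Z" "infinite W"
  shows "\<exists>Z'\<subseteq>W - {Inf W}. infinite Z' \<and> (\<forall>X\<subseteq>Z'. infinite X \<longrightarrow> (\<exists>u\<in>minimal_shifts W. iseg u X))"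
proof -
  have "\<forall>u\<in>minimal_shifts W. finite u"
    unfolding minimal_shifts_def shortest_shifts_def using shifts_finite by blast
  moreover have "infinite (W - {Inf W})" using W(2) by simp
  ultimately obtain Z' where Z': "Z' \<subseteq> W - {Inf W}" "infinite Z'"
    and alt: "(\<forall>u\<in>minimal_shifts W. \<not> u \<subseteq> Z') \<or>
      (\<forall>X\<subseteq>Z'. infinite X \<longrightarrow> (\<exists>u\<in>minimal_shifts W. iseg u X))"
    by (rule nash_williams[THEN exE]) (elim conjE, blast)
  have "\<not> (\<forall>u\<in>minimal_shifts W. \<not> u \<subseteq> Z')"
  proof -
    obtain v where v: "v \<in> shortest_shifts W" "iseg v Z'"
      using shortest_shifts_cover[OF W Z'] by blast
    have "v \<in> shortest_shifts W \<and> v \<subseteq> v" using v(1) by blast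
    from ex_has_least_nat[of "\<lambda>w. w \<in> shortest_shifts W \<and> w \<subseteq> v", OF this, of card]
    obtain w where w: "w \<in> shortest_shifts W" "w \<subseteq> v"
      and least: "\<And>w'. w' \<in> shortest_shifts W \<Longrightarrow> w' \<subseteq> v \<Longrightarrow> card w \<le> card w'"
      by blast
    have "w \<in> minimal_shifts W"
      unfolding minimal_shifts_def
    proof (intro CollectI conjI ballI impI)
      fix w' assume w': "w' \<in> shortest_shifts W" "w' \<subseteq> w"
      have "finite w" using w(1) shifts_finite unfolding shortest_shifts_def by blast
      moreover have "card w \<le> card w'" using least[OF w'(1)] w'(2) w(2) by blast
      ultimately show "w' = w" using card_least_imp_eq w'(2) by blast
    qed (fact w(1))
    moreover have "w \<subseteq> Z'" using w(2) iseg_subset[OF v(2)] by blast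
    ultimately show ?thesis by blast
  qed
  then show ?thesis using alt Z' by blast
qed

end

context principal_bad_map
begin

lemma minimal_shifts_shorter:
  assumes W: "W \<subseteq> Z2" and Z': "Z' \<subseteq> W"
    and cover: "\<forall>X\<subseteq>Z'. infinite X \<longrightarrow> (\<exists>u\<in>minimal_shifts W. iseg u X)"
  shows "shorter_on C {v \<in> minimal_shifts W. v \<subseteq> Z'} Z'"
  unfolding shorter_on_def
proof (intro allI impI ballI)
  fix X c c' assume X: "X \<subseteq> Z'" "infinite X" and c: "c \<in> C" "c' \<in> {v \<in> minimal_shifts W. v \<subseteq> Z'}"
    and segs: "iseg c X" "iseg c' (X - {Inf X})"
  have ne: "c \<noteq> {}" using c(1) nonempty by blast
  have "Inf X = Min c" using iseg_Min(2)[OF segs(1) ne] .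
  then have "iseg (c - {Min c}) (X - {Inf X})" using iseg_Diff_Min[OF segs(1) ne] by simp
  moreover have shift: "c - {Min c} \<in> shifts W"
    using c(1) iseg_subset[OF segs(1)] X(1) Z' unfolding shifts_def by blast
  moreover have "c' \<in> shortest_shifts W" using c(2) unfolding minimal_shifts_def by blast
  ultimately have "c' \<subseteq> c - {Min c}"
    using iseg_linear[OF _ segs(2)] iseg_subset unfolding shortest_shifts_def by blast
  then have "card c' \<le> card (c - {Min c})" using shifts_finite[OF shift] by (rule card_mono[rotated])
  also have "\<dots> < card c" using member_finite[OF c(1)] member_Min[OF c(1)] by (rule card_Diff1_less)
  finally show "card c' < card c" .
qed

lemma minimal_shifts_bad_on:
  assumes W: "W \<subseteq> Z2" "infinite W" "coherent W" and Z': "Z' \<subseteq> W" "infinite Z'"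
    and cover: "\<forall>X\<subseteq>Z'. infinite X \<longrightarrow> (\<exists>u\<in>minimal_shifts W. iseg u X)"
  shows "bad_on {v \<in> minimal_shifts W. v \<subseteq> Z'} Z' top"
proof -
  let ?C' = "{v \<in> minimal_shifts W. v \<subseteq> Z'}"
  have shifts: "?C' \<subseteq> shifts W"
    unfolding minimal_shifts_def shortest_shifts_def by blast
  have "barrier_on ?C' Z'"
    unfolding barrier_on_def
  proof (intro conjI ballI allI impI)
    fix s t assume "s \<in> ?C'" "t \<in> ?C'"
    then show "\<not> s \<subset> t" unfolding minimal_shifts_def by blast
  next
    fix X assume X: "X \<subseteq> Z'" "infinite X"
    then obtain u where "u \<in> minimal_shifts W" "iseg u X" using cover by blast
    then show "\<exists>s\<in>?C'. iseg s X" using X(1) iseg_subset by blast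
  qed (use Z'(2) shifts shifts_finite in auto)
  moreover have "top ` ?C' \<subseteq> P" using shifts shifts_mono[OF W(1)] top(1) by blast
  moreover have "\<not> good_map ?C' le top"
    unfolding good_map_def using top_bad[OF W] shifts by blast
  ultimately show ?thesis unfolding bad_on_def by blast
qed

lemma exists_shorter_bad_on:
  "\<exists>C' Z'. Z' \<subseteq> Z2 \<and> bad_on C' Z' top \<and> shorter_on C C' Z'"
proof -
  obtain W where W: "W \<subseteq> Z2" "infinite W" "coherent W" using exists_coherent by blast
  have "W \<subseteq> Z" using W(1) Z2(1) Z1(1) by blast
  from exists_minimal_shifts_cover[OF this W(2)]
  obtain Z' where Z': "Z' \<subseteq> W - {Inf W}" "infinite Z'"
    and cover: "\<forall>X\<subseteq>Z'. infinite X \<longrightarrow> (\<exists>u\<in>minimal_shifts W. iseg u X)" by blast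
  have "Z' \<subseteq> W" using Z'(1) by blast
  with minimal_shifts_bad_on[OF W _ Z'(2) cover] minimal_shifts_shorter[OF W(1) _ cover] W(1)
  show ?thesis by blast
qed

end

context bad_map
begin

lemma exists_shorter_bad_on:
  assumes H: "bqo_on (nonprincipal_ideals P le) (\<subseteq>)"
  shows "\<exists>C' Z' h'. Z' \<subseteq> Z \<and> bad_on C' Z' h' \<and> shorter_on C C' Z'"
proof -
  obtain Z0 where Z0: "Z0 \<subseteq> Z" "infinite Z0" "\<forall>s\<in>C. s \<subseteq> Z0 \<longrightarrow> s - {Min s} \<noteq> {}"
    using exists_no_singletons by blast
  obtain Z1 where Z1: "Z1 \<subseteq> Z0" "infinite Z1" "stable Z1" using exists_stable[OF Z0(2)] by blast
  have "Z1 \<subseteq> Z" using Z0(1) Z1(1) by blast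
  from exists_principal[OF H this Z1(2,3)]
  obtain Z2 where Z2: "Z2 \<subseteq> Z1" "infinite Z2"
    "\<forall>s\<in>C. s \<subseteq> Z2 \<longrightarrow> principal_on P le (ext_downset Z1 (s - {Min s}))" by blast
  interpret principal_bad_map P le C Z h Z1 Z2
    using \<open>Z1 \<subseteq> Z\<close> Z1 Z2 Z0(3) Z1(1) by unfold_locales blast+
  show ?thesis using exists_shorter_bad_on Z2(1) \<open>Z1 \<subseteq> Z\<close> by blast
qed

end

context wqo_poset
begin

lemma exists_shorter_bad_on_above_Inf:
  assumes H: "bqo_on (nonprincipal_ideals P le) (\<subseteq>)" and bad: "bad_on C Z h"
  shows "\<exists>C' Z' h'. Z' \<subseteq> Z \<inter> {Inf Z<..} \<and> bad_on C' Z' h' \<and> shorter_on C C' Z'"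
proof -
  let ?Z = "Z \<inter> {Inf Z<..}"
  have "Z - {..Inf Z} \<subseteq> ?Z" by auto
  moreover have "infinite Z" using bad unfolding bad_on_def barrier_on_def by blast
  ultimately have "infinite ?Z" by (meson Diff_infinite_finite finite_atMost finite_subset)
  then have "bad_on {s\<in>C. s \<subseteq> ?Z} ?Z h" using bad_on_restrict[OF bad] by blast
  then interpret bad_map P le "{s\<in>C. s \<subseteq> ?Z}" ?Z h by unfold_locales
  obtain C' Z' h' where "Z' \<subseteq> ?Z" "bad_on C' Z' h'" "shorter_on {s\<in>C. s \<subseteq> ?Z} C' Z'"
    using exists_shorter_bad_on[OF H] by blast
  moreover have "shorter_on C C' Z'"
    using calculation(1,3) iseg_subset unfolding shorter_on_def by (smt (verit) mem_Collect_eq order_trans)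
  ultimately show ?thesis by blast
qed

lemma no_bad_on:
  assumes H: "bqo_on (nonprincipal_ideals P le) (\<subseteq>)"
  shows "\<not> bad_on C Z h"
proof
  assume bad0: "bad_on C Z h"
  let ?bad = "\<lambda>(C, Z, h). bad_on C Z h"
  let ?step = "\<lambda>(C, Z, h) (C', Z', h'). Z' \<subseteq> Z \<inter> {Inf Z<..} \<and> shorter_on C C' Z'"
  have "\<exists>f. \<forall>k. ?bad (f k) \<and> ?step (f k) (f (Suc k))"
  proof (rule dependent_nat_choice)
    show "\<exists>x. ?bad x" using bad0 by (intro exI[of _ "(C, Z, h)"]) simp
    fix x :: "nat set set \<times> nat set \<times> (nat set \<Rightarrow> 'a)" and k :: nat
    assume x: "?bad x"
    obtain C0 Z0 h0 where x_eq: "x = (C0, Z0, h0)" by (cases x)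
    with x have "bad_on C0 Z0 h0" by simp
    from exists_shorter_bad_on_above_Inf[OF H this]
    obtain C' Z' h' where "Z' \<subseteq> Z0 \<inter> {Inf Z0<..}" "bad_on C' Z' h'" "shorter_on C0 C' Z'"
      by blast
    then show "\<exists>y. ?bad y \<and> ?step x y" unfolding x_eq by (intro exI[of _ "(C', Z', h')"]) simp
  qed
  then obtain f where f: "\<And>k. ?bad (f k) \<and> ?step (f k) (f (Suc k))" by blast
  define Cs where "Cs k = fst (f k)" for k
  define Zs where "Zs k = fst (snd (f k))" for k
  have "barrier_on (Cs k) (Zs k) \<and> Zs (Suc k) \<subseteq> Zs k \<inter> {Inf (Zs k)<..} \<and>
    shorter_on (Cs k) (Cs (Suc k)) (Zs (Suc k))" for k
  proof -
    obtain C0 Z0 h0 C1 Z1 h1 where "f k = (C0, Z0, h0)" "f (Suc k) = (C1, Z1, h1)"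
      by (metis prod_cases3)
    then show ?thesis using f[of k] unfolding Cs_def Zs_def bad_on_def by simp
  qed
  then have bad: "\<And>k. barrier_on (Cs k) (Zs k)"
    and nested: "\<And>k. Zs (Suc k) \<subseteq> Zs k \<inter> {Inf (Zs k)<..}"
    and shorter: "\<And>k. shorter_on (Cs k) (Cs (Suc k)) (Zs (Suc k))" by blast+
  define y where "y k = Inf (Zs (Suc k))" for k
  have y: "strict_mono y" "\<And>k. y ` {k..} \<subseteq> Zs (Suc k)"
    using strict_mono_Inf_nested[of "\<lambda>k. Zs (Suc k)"] barrier_on_infinite[OF bad] nested
    unfolding y_def by blast+
  define X where "X k = y ` {k..}" for k
  have X: "infinite (X k)" "Inf (X k) = y k" "X k - {Inf (X k)} = X (Suc k)" for k
    using strict_mono_image_atLeast[OF y(1)] unfolding X_def by simp_all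
  have X_sub: "X k \<subseteq> Zs (Suc k)" for k using y(2) unfolding X_def .
  then have "X k \<subseteq> Zs k" for k using nested by blast
  then have "\<forall>k. \<exists>c. c \<in> Cs k \<and> iseg c (X k)" using barrier_on_cover[OF bad] X(1) by blast
  then obtain c where c: "\<And>k. c k \<in> Cs k" "\<And>k. iseg (c k) (X k)" by (metis choice)
  have descent: "card (c (Suc k)) < card (c k)" for k
    using shorter[of k, unfolded shorter_on_def, rule_format, OF X_sub X(1) c(1) c(1) c(2)]
      c(2)[of "Suc k"] X(3)[of k] by simp
  have "card (c k) + k \<le> card (c 0)" for k
  proof (induction k)
    case (Suc k)
    then show ?case using descent[of k] by simp
  qed simp
  then show False by (metis add_leD2 not_less_eq_eq)
qed

end


theorem corollary1p2:
  fixes P :: "'a set" and le :: "'a \<Rightarrow> 'a \<Rightarrow> bool"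
  assumes "poset_on P le"
    and "wqo_on P le"
    and "bqo_on (nonprincipal_ideals P le) (\<subseteq>)"
  shows "bqo_on P le"
proof -
  interpret wqo_poset P le using assms(1,2) by unfold_locales
  have "good_map B le f" if "barrier B" "f ` B \<subseteq> P" for B and f :: "nat set \<Rightarrow> 'a"
    using no_bad_on[OF assms(3)] barrier_imp_barrier_on[OF that(1)] that(2)
    unfolding bad_on_def by blast
  then show ?thesis
    using assms(1) unfolding bqo_on_def alpha_bqo_on_def poset_on_def by blast
qed

end
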